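(* Suppose the probability space supports a $d$-dimensional Brownian motion $(B_t)_{t\in[0,T]}$ whose augmented natural filtration $\mathbb{G}=(\mathcal{G}_t)_{t\in[0,T]}$ satisfies that $\mathcal{G}_T$ is independent of $\mathcal{F}_T$, and let $\mathcal{H}_t=\mathcal{F}_t\vee\mathcal{G}_t$, $\mathbb{H}=(\mathcal{H}_t)_{t\in[0,T]}$. Let $p\ge1$ and let $S=(S_t)_{t\in[0,T]}$ be a c\`adl\`ag $\mathbb{R}^d$-valued $\mathbb{F}$-local martingale under $P$ which is sticky with respect to $\mathbb{F}$. Then for all $\chi>0$ there exist $Q\sim P$ with $\|Q-P\|_{tv}<\chi$ and a $Q$-martingale $\tilde S$ with respect to $\mathbb{H}$ such that $$E_Q\sup_{t\in[0,T]}|S_t-\tilde S_t|^p<\chi.$$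
   Context: $(\Omega,\mathcal{F},P)$ is a probability space with a filtration $\mathbb{F}=(\mathcal{F}_t)_{t\in[0,T]}$ satisfying the usual conditions (right-continuous, $\mathcal{F}_0$ contains all $P$-null sets). $\|\cdot\|_{tv}$ is the total variation norm of finite signed measures on $(\Omega,\mathcal{F})$. $|\cdot|$ is the Euclidean norm. A process $S$ is sticky with respect to $\mathbb{F}$ if for every $\mathbb{F}$-stopping time $\tau$ with values in $[0,T]$ and every strictly positive $\mathcal{F}_\tau$-measurable random variable $\kappa$, $P(\sup_{u\in[\tau,T]}|S_u-S_\tau|<\kappa\mid\mathcal{F}_\tau)>0$ a.s. *)

theory Defs
  imports "HOL-Probability.Probability"
begin

definition filtration_on :: "'a measure \<Rightarrow> real \<Rightarrow> (real \<Rightarrow> 'a set set) \<Rightarrow> bool" where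
  "filtration_on M T F \<longleftrightarrow>
     (\<forall>t\<in>{0..T}. sigma_algebra (space M) (F t) \<and> F t \<subseteq> sets M) \<and>
     (\<forall>s t. 0 \<le> s \<longrightarrow> s \<le> t \<longrightarrow> t \<le> T \<longrightarrow> F s \<subseteq> F t)"

definition usual_conditions :: "'a measure \<Rightarrow> real \<Rightarrow> (real \<Rightarrow> 'a set set) \<Rightarrow> bool" where
  "usual_conditions M T F \<longleftrightarrow>
     filtration_on M T F \<and>
     (\<forall>t\<in>{0..<T}. F t = (\<Inter>s\<in>{t<..T}. F s)) \<and>
     null_sets M \<subseteq> F 0"

definition stop_time :: "'a measure \<Rightarrow> real \<Rightarrow> (real \<Rightarrow> 'a set set) \<Rightarrow> ('a \<Rightarrow> real) \<Rightarrow> bool" where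
  "stop_time M T F \<tau> \<longleftrightarrow>
     (\<forall>\<omega>\<in>space M. \<tau> \<omega> \<in> {0..T}) \<and>
     (\<forall>t\<in>{0..T}. {\<omega>\<in>space M. \<tau> \<omega> \<le> t} \<in> F t)"

definition F_at :: "'a measure \<Rightarrow> real \<Rightarrow> (real \<Rightarrow> 'a set set) \<Rightarrow> ('a \<Rightarrow> real) \<Rightarrow> 'a set set" where
  "F_at M T F \<tau> = {A \<in> F T. \<forall>t\<in>{0..T}. A \<inter> {\<omega>\<in>space M. \<tau> \<omega> \<le> t} \<in> F t}"

definition adapted_on :: "'a measure \<Rightarrow> real \<Rightarrow> (real \<Rightarrow> 'a set set) \<Rightarrow> (real \<Rightarrow> 'a \<Rightarrow> 'b::topological_space) \<Rightarrow> bool" where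
  "adapted_on M T F X \<longleftrightarrow> (\<forall>t\<in>{0..T}. \<forall>A\<in>sets borel. X t -` A \<inter> space M \<in> F t)"

text \<open>Martingale on [0,T]: adapted, integrable, and E[X_t | F_s] = X_s (s \<le> t),
  expressed by the defining property of conditional expectation.\<close>
definition martingale_on :: "'a measure \<Rightarrow> real \<Rightarrow> (real \<Rightarrow> 'a set set) \<Rightarrow> (real \<Rightarrow> 'a \<Rightarrow> real^'d) \<Rightarrow> bool" where
  "martingale_on M T F X \<longleftrightarrow>
     adapted_on M T F X \<and>
     (\<forall>t\<in>{0..T}. integrable M (X t)) \<and>
     (\<forall>s t A. 0 \<le> s \<longrightarrow> s \<le> t \<longrightarrow> t \<le> T \<longrightarrow> A \<in> F s \<longrightarrow>
        (LINT \<omega>:A|M. X t \<omega>) = (LINT \<omega>:A|M. X s \<omega>))"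

definition local_martingale_on :: "'a measure \<Rightarrow> real \<Rightarrow> (real \<Rightarrow> 'a set set) \<Rightarrow> (real \<Rightarrow> 'a \<Rightarrow> real^'d) \<Rightarrow> bool" where
  "local_martingale_on M T F X \<longleftrightarrow>
     (\<exists>\<tau> :: nat \<Rightarrow> 'a \<Rightarrow> real.
        (\<forall>n. stop_time M T F (\<tau> n)) \<and>
        (\<forall>n. \<forall>\<omega>\<in>space M. \<tau> n \<omega> \<le> \<tau> (Suc n) \<omega>) \<and>
        (AE \<omega> in M. \<exists>n. \<tau> n \<omega> = T) \<and>
        (\<forall>n. martingale_on M T F (\<lambda>t \<omega>. X (min t (\<tau> n \<omega>)) \<omega>)))"

definition cadlag_on :: "'a measure \<Rightarrow> real \<Rightarrow> (real \<Rightarrow> 'a \<Rightarrow> 'b::topological_space) \<Rightarrow> bool" where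
  "cadlag_on M T X \<longleftrightarrow>
     (\<forall>\<omega>\<in>space M.
        (\<forall>t\<in>{0..<T}. ((\<lambda>s. X s \<omega>) \<longlongrightarrow> X t \<omega>) (at_right t)) \<and>
        (\<forall>t\<in>{0<..T}. \<exists>l. ((\<lambda>s. X s \<omega>) \<longlongrightarrow> l) (at_left t)))"

definition sticky :: "'a measure \<Rightarrow> real \<Rightarrow> (real \<Rightarrow> 'a set set) \<Rightarrow> (real \<Rightarrow> 'a \<Rightarrow> real^'d) \<Rightarrow> bool" where
  "sticky M T F S \<longleftrightarrow>
     (\<forall>\<tau> \<kappa>. stop_time M T F \<tau> \<longrightarrow>
        \<kappa> \<in> borel_measurable (sigma (space M) (F_at M T F \<tau>)) \<longrightarrow>
        (\<forall>\<omega>\<in>space M. \<kappa> \<omega> > 0) \<longrightarrow>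
        (AE \<omega> in M. real_cond_exp M (sigma (space M) (F_at M T F \<tau>))
            (indicator {\<omega>\<in>space M. (SUP u\<in>{\<tau> \<omega>..T}. ennreal (norm (S u \<omega> - S (\<tau> \<omega>) \<omega>)))
                                       < ennreal (\<kappa> \<omega>)}) \<omega> > 0))"

definition brownian_motion_on :: "'a measure \<Rightarrow> real \<Rightarrow> (real \<Rightarrow> 'a \<Rightarrow> real^'d) \<Rightarrow> bool" where
  "brownian_motion_on M T B \<longleftrightarrow>
     (\<forall>\<omega>\<in>space M. B 0 \<omega> = 0) \<and>
     (\<forall>\<omega>\<in>space M. continuous_on {0..T} (\<lambda>t. B t \<omega>)) \<and>
     (\<forall>t\<in>{0..T}. B t \<in> borel_measurable M) \<and>
     (\<forall>s t. 0 \<le> s \<longrightarrow> s < t \<longrightarrow> t \<le> T \<longrightarrow>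
        distributed M lborel (\<lambda>\<omega>. B t \<omega> - B s \<omega>)
          (\<lambda>x. ennreal (\<Prod>i\<in>UNIV. normal_density 0 (sqrt (t - s)) (x $ i)))) \<and>
     (\<forall>ts :: real list. sorted_wrt (<) ts \<longrightarrow> set ts \<subseteq> {0..T} \<longrightarrow>
        prob_space.indep_vars M (\<lambda>_. borel) (\<lambda>k \<omega>. B (ts ! Suc k) \<omega> - B (ts ! k) \<omega>)
          {..<length ts - 1})"

definition aug_nat_filtration :: "'a measure \<Rightarrow> (real \<Rightarrow> 'a \<Rightarrow> real^'d) \<Rightarrow> real \<Rightarrow> 'a set set" where
  "aug_nat_filtration M B t =
     sigma_sets (space M)
       ((\<Union>s\<in>{0..t}. {B s -` A \<inter> space M | A. A \<in> sets borel}) \<union> null_sets M)"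

definition join_sa :: "'a measure \<Rightarrow> 'a set set \<Rightarrow> 'a set set \<Rightarrow> 'a set set" where
  "join_sa M A B = sigma_sets (space M) (A \<union> B)"

definition equiv_measure :: "'a measure \<Rightarrow> 'a measure \<Rightarrow> bool" where
  "equiv_measure Q P \<longleftrightarrow> sets Q = sets P \<and> absolutely_continuous P Q \<and> absolutely_continuous Q P"

definition tv_norm_diff :: "'a measure \<Rightarrow> 'a measure \<Rightarrow> real" where
  "tv_norm_diff Q P = (SUP \<A> \<in> {\<A>. finite \<A> \<and> \<A> \<subseteq> sets P \<and> disjoint \<A>}.
                         \<Sum>A\<in>\<A>. \<bar>measure Q A - measure P A\<bar>)"

end

theory Submission
  imports Defs
begin

(* Choose a localizing time tau with P(tau < T) < chi/2 and let the approximating process be S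
   stopped at tau.  Stickiness at tau gives P(E | F_tau) > 0 for E = {sup_{u >= tau} |S_u - S_tau| < 1}.
   With f = sup_t |S_t - S_{t /\ tau}|^p, the density
     Z = (1_E / P(E | F_tau) + 1/(1+f)) / (1 + E[1/(1+f) | F_tau])   on {tau < T},   Z = 1 elsewhere,
   is strictly positive with E[Z | F_tau] = 1.  Hence Q = Z P agrees with P on F_tau, so the stopped
   process stays an F-martingale, and Q = P off {tau < T}, so ||Q - P|| <= 2 P(tau < T); since
   Z f <= 1_E / P(E | F_tau) + 1 there, also E_Q f <= 2 P(tau < T).  Finally Z and the stopped process
   are F_T-measurable and G_T is independent of F_T, which extends the martingale property to F v G. *)

lemma compact_locally_bounded:
  fixes g :: "'a::topological_space \<Rightarrow> 'b::real_normed_vector"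
  assumes "compact K"
    and local: "\<And>t. t \<in> K \<Longrightarrow> \<exists>U c. open U \<and> t \<in> U \<and> (\<forall>s\<in>U \<inter> K. norm (g s) \<le> c)"
  shows "\<exists>c. \<forall>s\<in>K. norm (g s) \<le> c"
proof -
  obtain U c where U: "\<And>t. t \<in> K \<Longrightarrow> open (U t) \<and> t \<in> U t \<and> (\<forall>s\<in>U t \<inter> K. norm (g s) \<le> c t)"
    using local by metis
  obtain K' where K': "K' \<subseteq> K" "finite K'" "K \<subseteq> (\<Union>t\<in>K'. U t)"
    using compactE_image[OF assms(1), of K U] U by blast
  have "norm (g s) \<le> Max (c ` K')" if s: "s \<in> K" for s
  proof -
    obtain t where "t \<in> K'" "s \<in> U t" using K'(3) s by blast
    then have "norm (g s) \<le> c t" using U K'(1) s by blast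
    also have "\<dots> \<le> Max (c ` K')" using \<open>t \<in> K'\<close> K'(2) by simp
    finally show ?thesis .
  qed
  then show ?thesis by blast
qed

lemma cadlag_path_bounded:
  fixes g :: "real \<Rightarrow> 'b::real_normed_vector"
  assumes right: "\<forall>t\<in>{0..<T}. (g \<longlongrightarrow> g t) (at_right t)"
    and left: "\<forall>t\<in>{0<..T}. \<exists>l. (g \<longlongrightarrow> l) (at_left t)"
  shows "\<exists>c. \<forall>t\<in>{0..T}. norm (g t) \<le> c"
proof (rule compact_locally_bounded[OF compact_Icc])
  fix t assume t: "t \<in> {0..T}"
  have bounded_near: "eventually (\<lambda>s. norm (g s) \<le> norm l + 1) F" if "(g \<longlongrightarrow> l) F" for l F
    using order_tendstoD(2)[OF tendsto_norm[OF that], of "norm l + 1"] by (auto elim: eventually_mono)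
  obtain b c1 where b: "t < b" "\<forall>s\<in>{t<..<b} \<inter> {0..T}. norm (g s) \<le> c1"
  proof (cases "t < T")
    case True
    then have "eventually (\<lambda>s. norm (g s) \<le> norm (g t) + 1) (at_right t)"
      using bounded_near right t by simp
    then obtain b where "t < b" "\<forall>s>t. s < b \<longrightarrow> norm (g s) \<le> norm (g t) + 1"
      unfolding eventually_at_right_field by blast
    then show ?thesis using that[of b "norm (g t) + 1"] by auto
  qed (use t in \<open>auto intro: that[of "t + 1" 0]\<close>)
  obtain a c2 where a: "a < t" "\<forall>s\<in>{a<..<t} \<inter> {0..T}. norm (g s) \<le> c2"
  proof (cases "0 < t")
    case True
    then obtain l where "(g \<longlongrightarrow> l) (at_left t)" using left t by fastforce
    then have "eventually (\<lambda>s. norm (g s) \<le> norm l + 1) (at_left t)" by (rule bounded_near)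
    then obtain a where "a < t" "\<forall>s>a. s < t \<longrightarrow> norm (g s) \<le> norm l + 1"
      unfolding eventually_at_left_field by blast
    then show ?thesis using that[of a "norm l + 1"] by auto
  qed (use t in \<open>auto intro: that[of "t - 1" 0]\<close>)
  have "\<forall>s\<in>{a<..<b} \<inter> {0..T}. norm (g s) \<le> max (norm (g t)) (max c1 c2)"
  proof
    fix s assume "s \<in> {a<..<b} \<inter> {0..T}"
    then show "norm (g s) \<le> max (norm (g t)) (max c1 c2)"
      using a b by (cases s t rule: linorder_cases) force+
  qed
  then show "\<exists>U c. open U \<and> t \<in> U \<and> (\<forall>s\<in>U \<inter> {0..T}. norm (g s) \<le> c)"
    using a b by (intro exI[of _ "{a<..<b}"]) auto
qed

lemma SUP_right_continuous_eq_SUP_rat: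
  fixes h :: "real \<Rightarrow> ennreal"
  assumes "a \<le> T" and right: "\<forall>u\<in>{a..<T}. (h \<longlongrightarrow> h u) (at_right u)"
  shows "(SUP u\<in>{a..T}. h u) = (SUP q\<in>{q. (q \<in> \<rat> \<or> q = T) \<and> a \<le> q \<and> q \<le> T}. h q)"
proof (rule antisym)
  let ?I = "{q. (q \<in> \<rat> \<or> q = T) \<and> a \<le> q \<and> q \<le> T}"
  show "(SUP u\<in>{a..T}. h u) \<le> (SUP q\<in>?I. h q)"
  proof (rule SUP_least)
    fix u assume u: "u \<in> {a..T}"
    show "h u \<le> (SUP q\<in>?I. h q)"
    proof (cases "u = T")
      case False
      let ?R = "{u<..<T} \<inter> \<rat>"
      have "(h \<longlongrightarrow> h u) (at_right u)" using right u False by simp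
      then have "(h \<longlongrightarrow> h u) (at u within ?R)" by (rule tendsto_within_subset) auto
      moreover have "\<forall>q\<in>?R. h q \<le> (SUP q\<in>?I. h q)" using u by (auto intro: SUP_upper)
      then have "eventually (\<lambda>q. h q \<le> (SUP q\<in>?I. h q)) (at u within ?R)"
        by (simp add: eventually_at_filter)
      moreover have "u islimpt ?R"
      proof (rule islimpt_approachable[THEN iffD2], intro allI impI)
        fix e :: real assume "e > 0"
        then obtain q where "q \<in> \<rat>" "u < q" "q < min T (u + e)"
          using Rats_dense_in_real[of u "min T (u + e)"] u False by auto
        then show "\<exists>q\<in>?R. q \<noteq> u \<and> dist q u < e" by (intro bexI[of _ q]) (auto simp: dist_real_def)
      qed
      then have "at u within ?R \<noteq> bot" by (simp add: trivial_limit_within)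
      ultimately show ?thesis by (rule tendsto_upperbound)
    next
      case True
      then have "u \<in> ?I" using u by simp
      then show ?thesis by (rule SUP_upper)
    qed
  qed
next
  show "(SUP q\<in>{q. (q \<in> \<rat> \<or> q = T) \<and> a \<le> q \<and> q \<le> T}. h q) \<le> (SUP u\<in>{a..T}. h u)"
    by (rule SUP_subset_mono) auto
qed

lemma SUP_if_else_0:
  fixes h :: "'b \<Rightarrow> ennreal"
  shows "(SUP q\<in>I. if P q then h q else 0) = (SUP q\<in>{q\<in>I. P q}. h q)"
proof (rule antisym)
  show "(SUP q\<in>I. if P q then h q else 0) \<le> (SUP q\<in>{q\<in>I. P q}. h q)"
  proof (rule SUP_least)
    fix q assume "q \<in> I"
    then show "(if P q then h q else 0) \<le> (SUP q\<in>{q\<in>I. P q}. h q)"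
      by (cases "P q") (auto intro: SUP_upper)
  qed
  show "(SUP q\<in>{q\<in>I. P q}. h q) \<le> (SUP q\<in>I. if P q then h q else 0)"
  proof (rule SUP_least)
    fix q assume q: "q \<in> {q\<in>I. P q}"
    then have "h q = (if P q then h q else 0)" by simp
    also have "\<dots> \<le> (SUP q\<in>I. if P q then h q else 0)" using q by (intro SUP_upper) auto
    finally show "h q \<le> (SUP q\<in>I. if P q then h q else 0)" .
  qed
qed

lemma powr_le_iff_le_powr_inverse:
  fixes x c p :: real
  assumes "0 \<le> x" and "0 \<le> c" and "0 < p"
  shows "x powr p \<le> c \<longleftrightarrow> x \<le> c powr (1/p)"
proof
  assume "x powr p \<le> c"
  then have "(x powr p) powr (1/p) \<le> c powr (1/p)" using assms by (intro powr_mono2) auto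
  then show "x \<le> c powr (1/p)" using assms by (simp add: powr_powr)
next
  assume "x \<le> c powr (1/p)"
  then have "x powr p \<le> (c powr (1/p)) powr p" using assms by (intro powr_mono2) auto
  then show "x powr p \<le> c" using assms by (simp add: powr_powr)
qed

lemma ennreal_le_iff_less_all_Suc:
  fixes d :: ennreal and c :: real
  assumes "0 \<le> c"
  shows "d \<le> ennreal c \<longleftrightarrow> (\<forall>j::nat. d < ennreal (c + 1 / Suc j))"
proof
  assume "d \<le> ennreal c"
  then show "\<forall>j::nat. d < ennreal (c + 1 / Suc j)"
    using assms by (auto intro: le_less_trans simp: ennreal_less_iff)
next
  assume less: "\<forall>j::nat. d < ennreal (c + 1 / Suc j)"
  show "d \<le> ennreal c"
  proof (rule ccontr)
    assume "\<not> d \<le> ennreal c"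
    moreover obtain e where e: "d = ennreal e" "0 \<le> e" using less by (cases d) auto
    ultimately have "c < e" using assms by (simp add: ennreal_less_iff)
    then obtain j where j: "inverse (real (Suc j)) < e - c"
      using reals_Archimedean[of "e - c"] by auto
    have "e < c + 1 / Suc j" using less e ennreal_less_iff by blast
    then show False using j by (simp add: inverse_eq_divide)
  qed
qed

lemma ennreal_inverse_mult_self: "(x::ennreal) \<noteq> 0 \<Longrightarrow> x \<noteq> \<top> \<Longrightarrow> inverse x * x = 1"
  by (metis divide_ennreal_def ennreal_divide_self less_top mult.commute)

lemma ennreal_inverse_one_plus_le: "inverse (1 + (x::ennreal)) \<le> 1"
proof -
  have "1 / (1 + x) \<le> 1" by (rule divide_le_posI_ennreal) (auto intro: add_pos_nonneg)
  then show ?thesis by (simp add: divide_ennreal_def)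
qed

lemma ennreal_inverse_one_plus_mult_le: "(x::ennreal) \<noteq> \<top> \<Longrightarrow> inverse (1 + x) * x \<le> 1"
proof -
  assume "x \<noteq> \<top>"
  have "inverse (1 + x) * x \<le> inverse (1 + x) * (1 + x)" by (intro mult_left_mono) auto
  also have "\<dots> = 1" using \<open>x \<noteq> \<top>\<close> by (intro ennreal_inverse_mult_self) auto
  finally show ?thesis .
qed

section \<open>Filtrations, stopping times and localization\<close>

lemma
  assumes "filtration_on M T F" and "t \<in> {0..T}"
  shows filtration_on_sigma_algebra: "sigma_algebra (space M) (F t)"
    and filtration_on_sets: "F t \<subseteq> sets M"
    and filtration_on_mono: "s \<in> {0..t} \<Longrightarrow> F s \<subseteq> F t"
  using assms unfolding filtration_on_def by auto

lemma
  assumes "filtration_on M T F" and "t \<in> {0..T}"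
  shows sets_sigma_filtration: "sets (sigma (space M) (F t)) = F t"
    and space_sigma_filtration: "space (sigma (space M) (F t)) = space M"
    and subalgebra_sigma_filtration: "subalgebra M (sigma (space M) (F t))"
  using filtration_on_sigma_algebra[OF assms] filtration_on_sets[OF assms]
  by (auto simp: subalgebra_def sigma_algebra.sets_measure_of_eq sigma_algebra.space_measure_of_eq)

lemma stop_time_measurable:
  assumes fil: "filtration_on M T F" and "0 \<le> T" and stop: "stop_time M T F \<tau>"
  shows "\<tau> \<in> borel_measurable (sigma (space M) (F T))"
proof (rule borel_measurableI_le)
  fix y :: real
  have T: "T \<in> {0..T}" using \<open>0 \<le> T\<close> by simp
  interpret FT: sigma_algebra "space M" "F T" by (rule filtration_on_sigma_algebra[OF fil T])
  have "{\<omega> \<in> space M. \<tau> \<omega> \<le> y} \<in> F T"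
  proof -
    consider "y < 0" | "y \<in> {0..T}" | "T < y" by fastforce
    then show ?thesis
    proof cases
      case 1
      then have "{\<omega> \<in> space M. \<tau> \<omega> \<le> y} = {}" using stop unfolding stop_time_def by force
      then show ?thesis by (simp only: FT.empty_sets)
    next
      case 2
      then show ?thesis using stop filtration_on_mono[OF fil T, of y] unfolding stop_time_def by blast
    next
      case 3
      then have "{\<omega> \<in> space M. \<tau> \<omega> \<le> y} = space M" using stop unfolding stop_time_def by force
      then show ?thesis by simp
    qed
  qed
  then show "{\<omega> \<in> space (sigma (space M) (F T)). \<tau> \<omega> \<le> y} \<in> sets (sigma (space M) (F T))"
    by (simp add: sets_sigma_filtration[OF fil T] space_sigma_filtration[OF fil T])
qed

lemma (in finite_measure) measure_localizing_unfinished_tendsto_0: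
  fixes \<tau> :: "nat \<Rightarrow> 'a \<Rightarrow> real"
  assumes meas: "\<And>m. \<tau> m \<in> borel_measurable M"
    and mono: "\<And>m \<omega>. \<omega> \<in> space M \<Longrightarrow> \<tau> m \<omega> \<le> \<tau> (Suc m) \<omega>"
    and reach: "AE \<omega> in M. \<exists>m. \<tau> m \<omega> = T"
  shows "(\<lambda>m. measure M {\<omega>\<in>space M. \<tau> m \<omega> < T}) \<longlonglongrightarrow> 0"
proof -
  define U where "U m = {\<omega>\<in>space M. \<tau> m \<omega> < T}" for m
  have U_sets: "U m \<in> sets M" for m
    unfolding U_def using meas[of m] by measurable
  have "decseq U"
  proof (rule decseq_SucI)
    show "U (Suc m) \<subseteq> U m" for m
      by (auto simp: U_def) (meson mono order_le_less_trans)
  qed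
  then have "(\<lambda>m. measure M (U m)) \<longlonglongrightarrow> measure M (\<Inter>m. U m)"
    using U_sets by (intro finite_Lim_measure_decseq) auto
  moreover have "(\<Inter>m. U m) \<in> null_sets M"
  proof -
    have "AE \<omega> in M. \<omega> \<notin> (\<Inter>m. U m)"
      using reach by eventually_elim (auto simp: U_def)
    moreover have "(\<Inter>m. U m) \<in> sets M" using U_sets by blast
    ultimately show ?thesis by (simp add: AE_iff_null_sets)
  qed
  ultimately show ?thesis unfolding U_def by (simp add: measure_eq_0_null_sets)
qed

lemma (in prob_space) local_martingale_on_small_failure:
  assumes fil: "filtration_on M T F" and "0 \<le> T" and local: "local_martingale_on M T F S" and "0 < \<epsilon>"
  obtains \<sigma> :: "nat \<Rightarrow> 'a \<Rightarrow> real" and n where "\<And>m. stop_time M T F (\<sigma> m)"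
    and "AE \<omega> in M. \<exists>m. \<sigma> m \<omega> = T" and "\<And>m. martingale_on M T F (\<lambda>t \<omega>. S (min t (\<sigma> m \<omega>)) \<omega>)"
    and "measure M {\<omega>\<in>space M. \<sigma> n \<omega> < T} < \<epsilon>"
proof -
  obtain \<sigma> :: "nat \<Rightarrow> 'a \<Rightarrow> real" where stop: "\<And>m. stop_time M T F (\<sigma> m)"
    and mono: "\<And>m \<omega>. \<omega> \<in> space M \<Longrightarrow> \<sigma> m \<omega> \<le> \<sigma> (Suc m) \<omega>"
    and reach: "AE \<omega> in M. \<exists>m. \<sigma> m \<omega> = T"
    and mart: "\<And>m. martingale_on M T F (\<lambda>t \<omega>. S (min t (\<sigma> m \<omega>)) \<omega>)"
    using local unfolding local_martingale_on_def by blast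
  have "\<sigma> m \<in> borel_measurable M" for m
    using measurable_from_subalg[OF subalgebra_sigma_filtration[OF fil] stop_time_measurable[OF fil _ stop]]
      \<open>0 \<le> T\<close> by simp
  then have "(\<lambda>m. measure M {\<omega>\<in>space M. \<sigma> m \<omega> < T}) \<longlonglongrightarrow> 0"
    by (intro measure_localizing_unfinished_tendsto_0 mono reach)
  then have "eventually (\<lambda>m. measure M {\<omega>\<in>space M. \<sigma> m \<omega> < T} < \<epsilon>) sequentially"
    using \<open>0 < \<epsilon>\<close> by (rule order_tendstoD(2))
  then obtain n where "measure M {\<omega>\<in>space M. \<sigma> n \<omega> < T} < \<epsilon>"
    unfolding eventually_sequentially by blast
  then show ?thesis using that stop reach mart by blast
qed

lemma F_at_subset: "F_at M T F \<tau> \<subseteq> F T"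
  unfolding F_at_def by blast

lemma
  assumes fil: "filtration_on M T F" and "0 \<le> T"
  shows sets_sigma_F_at: "sets (sigma (space M) (F_at M T F \<tau>)) = sigma_sets (space M) (F_at M T F \<tau>)"
    and space_sigma_F_at: "space (sigma (space M) (F_at M T F \<tau>)) = space M"
    and subalgebra_sigma_F_at: "subalgebra (sigma (space M) (F T)) (sigma (space M) (F_at M T F \<tau>))"
    and subalgebra_M_sigma_F_at: "subalgebra M (sigma (space M) (F_at M T F \<tau>))"
proof -
  have T: "T \<in> {0..T}" using \<open>0 \<le> T\<close> by simp
  have gen: "F_at M T F \<tau> \<subseteq> Pow (space M)"
    using F_at_subset filtration_on_sets[OF fil T] sets.space_closed by blast
  show sets: "sets (sigma (space M) (F_at M T F \<tau>)) = sigma_sets (space M) (F_at M T F \<tau>)"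
    using gen by (rule sets_measure_of)
  show space: "space (sigma (space M) (F_at M T F \<tau>)) = space M"
    using gen by (rule space_measure_of)
  have "sigma_sets (space M) (F_at M T F \<tau>) \<subseteq> F T"
    using filtration_on_sigma_algebra[OF fil T] F_at_subset by (rule sigma_algebra.sigma_sets_subset)
  then show "subalgebra (sigma (space M) (F T)) (sigma (space M) (F_at M T F \<tau>))"
    unfolding subalgebra_def sets space
    by (simp add: sets_sigma_filtration[OF fil T] space_sigma_filtration[OF fil T])
  then show "subalgebra M (sigma (space M) (F_at M T F \<tau>))"
    using subalgebra_sigma_filtration[OF fil T] by (auto simp: subalgebra_def)
qed

lemma stop_time_less_in_F_at:
  assumes fil: "filtration_on M T F" and "0 \<le> T" and stop: "stop_time M T F \<tau>"
  shows "{\<omega>\<in>space M. \<tau> \<omega> < T} \<in> F_at M T F \<tau>"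
proof -
  have T: "T \<in> {0..T}" using \<open>0 \<le> T\<close> by simp
  have "{\<omega>\<in>space M. \<tau> \<omega> < T} \<in> sets (sigma (space M) (F T))"
    using stop_time_measurable[OF fil \<open>0 \<le> T\<close> stop]
    by (measurable; simp add: space_sigma_filtration[OF fil T])
  then have in_FT: "{\<omega>\<in>space M. \<tau> \<omega> < T} \<in> F T"
    by (simp add: sets_sigma_filtration[OF fil T])
  have "{\<omega>\<in>space M. \<tau> \<omega> < T} \<inter> {\<omega>\<in>space M. \<tau> \<omega> \<le> t} \<in> F t" if t: "t \<in> {0..T}" for t
  proof (cases "t < T")
    case True
    then have "{\<omega>\<in>space M. \<tau> \<omega> < T} \<inter> {\<omega>\<in>space M. \<tau> \<omega> \<le> t} = {\<omega>\<in>space M. \<tau> \<omega> \<le> t}"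
      by auto
    then show ?thesis using stop t unfolding stop_time_def by simp
  next
    case False
    then have "t = T" using t by simp
    moreover have "{\<omega>\<in>space M. \<tau> \<omega> < T} \<inter> {\<omega>\<in>space M. \<tau> \<omega> \<le> T} = {\<omega>\<in>space M. \<tau> \<omega> < T}"
      by auto
    ultimately show ?thesis using in_FT by simp
  qed
  then show ?thesis using in_FT unfolding F_at_def by blast
qed

lemma not_stopped_in_F:
  assumes fil: "filtration_on M T F" and stop: "stop_time M T F \<tau>"
    and s: "s \<in> {0..T}" and A: "A \<in> F s"
  shows "{\<omega>\<in>A. s < \<tau> \<omega>} \<in> F s"
proof -
  interpret Fs: sigma_algebra "space M" "F s" by (rule filtration_on_sigma_algebra[OF fil s])
  have "{\<omega>\<in>A. s < \<tau> \<omega>} = A \<inter> (space M - {\<omega>\<in>space M. \<tau> \<omega> \<le> s})"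
    using A Fs.sets_into_space by auto
  moreover have "{\<omega>\<in>space M. \<tau> \<omega> \<le> s} \<in> F s" using stop s unfolding stop_time_def by blast
  ultimately show ?thesis using A by auto
qed

lemma not_stopped_in_F_at:
  assumes fil: "filtration_on M T F" and stop: "stop_time M T F \<tau>"
    and s: "s \<in> {0..T}" and A: "A \<in> F s"
  shows "{\<omega>\<in>A. s < \<tau> \<omega>} \<in> F_at M T F \<tau>"
proof -
  note in_Fs = not_stopped_in_F[OF fil stop s A]
  have "{\<omega>\<in>A. s < \<tau> \<omega>} \<inter> {\<omega>\<in>space M. \<tau> \<omega> \<le> u} \<in> F u" if u: "u \<in> {0..T}" for u
  proof (cases "u \<le> s")
    case True
    then have "{\<omega>\<in>A. s < \<tau> \<omega>} \<inter> {\<omega>\<in>space M. \<tau> \<omega> \<le> u} = {}" by auto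
    moreover have "{} \<in> F u"
      using sigma_algebra.sigma_sets_eq[OF filtration_on_sigma_algebra[OF fil u]] sigma_sets.Empty by blast
    ultimately show ?thesis by simp
  next
    case False
    interpret Fu: sigma_algebra "space M" "F u" by (rule filtration_on_sigma_algebra[OF fil u])
    have "{\<omega>\<in>A. s < \<tau> \<omega>} \<in> F u" using in_Fs filtration_on_mono[OF fil u, of s] s False by auto
    then show ?thesis using stop u unfolding stop_time_def by blast
  qed
  moreover have "{\<omega>\<in>A. s < \<tau> \<omega>} \<in> F T" using in_Fs filtration_on_mono[OF fil, of T s] s by auto
  ultimately show ?thesis unfolding F_at_def by blast
qed

lemma stopped_process_measurable_F_at:
  assumes fil: "filtration_on M T F" and "0 \<le> T" and stop: "stop_time M T F \<tau>"
    and adapted: "adapted_on M T F (\<lambda>t \<omega>. X (min t (\<tau> \<omega>)) \<omega>)" and t: "t \<in> {0..T}"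
  shows "(\<lambda>\<omega>. X (min t (\<tau> \<omega>)) \<omega>) \<in> borel_measurable (sigma (space M) (F_at M T F \<tau>))"
proof (rule measurableI)
  fix A :: "'b set" assume A: "A \<in> sets borel"
  let ?X = "\<lambda>t \<omega>. X (min t (\<tau> \<omega>)) \<omega>"
  have X_in: "?X u -` A \<inter> space M \<in> F u" if "u \<in> {0..T}" for u
    using adapted A that unfolding adapted_on_def by blast
  have "?X t -` A \<inter> space M \<inter> {\<omega>\<in>space M. \<tau> \<omega> \<le> u} \<in> F u" if u: "u \<in> {0..T}" for u
  proof -
    interpret Fu: sigma_algebra "space M" "F u" by (rule filtration_on_sigma_algebra[OF fil u])
    have stop_u: "{\<omega>\<in>space M. \<tau> \<omega> \<le> u} \<in> F u" using stop u unfolding stop_time_def by blast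
    show ?thesis
    proof (cases "t \<le> u")
      case True
      then have "?X t -` A \<inter> space M \<in> F u" using X_in[OF t] filtration_on_mono[OF fil u, of t] t by auto
      then show ?thesis using stop_u by blast
    next
      case False
      then have "?X t -` A \<inter> space M \<inter> {\<omega>\<in>space M. \<tau> \<omega> \<le> u}
          = ?X u -` A \<inter> space M \<inter> {\<omega>\<in>space M. \<tau> \<omega> \<le> u}"
        by (auto simp: min_absorb2)
      then show ?thesis using X_in[OF u] stop_u by auto
    qed
  qed
  moreover have "?X t -` A \<inter> space M \<in> F T" using X_in[OF t] filtration_on_mono[OF fil, of T t] t by auto
  ultimately have "?X t -` A \<inter> space M \<in> F_at M T F \<tau>" unfolding F_at_def by blast
  then show "?X t -` A \<inter> space (sigma (space M) (F_at M T F \<tau>)) \<in> sets (sigma (space M) (F_at M T F \<tau>))"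
    by (simp add: sets_sigma_F_at[OF fil \<open>0 \<le> T\<close>] space_sigma_F_at[OF fil \<open>0 \<le> T\<close>])
qed simp

lemma sigma_algebra_aug_nat_filtration: "sigma_algebra (space M) (aug_nat_filtration M B t)"
  unfolding aug_nat_filtration_def by (intro sigma_algebra_sigma_sets) (auto dest: sets.sets_into_space)

lemma aug_nat_filtration_mono: "s \<le> t \<Longrightarrow> aug_nat_filtration M B s \<subseteq> aug_nat_filtration M B t"
  unfolding aug_nat_filtration_def by (intro sigma_sets_mono' Un_mono UN_mono) auto

lemma adapted_on_measurable:
  assumes fil: "filtration_on M T F" and adapted: "adapted_on M T F X"
    and t: "t \<in> {0..T}" and u: "u \<in> {t..T}"
  shows "X t \<in> borel_measurable (sigma (space M) (F u))"
proof -
  have u': "u \<in> {0..T}" using t u by auto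
  show ?thesis
  proof (rule measurableI)
    fix A :: "'b set" assume "A \<in> sets borel"
    then have "X t -` A \<inter> space M \<in> F u"
      using adapted t filtration_on_mono[OF fil u', of t] u unfolding adapted_on_def by auto
    then show "X t -` A \<inter> space (sigma (space M) (F u)) \<in> sets (sigma (space M) (F u))"
      by (simp add: sets_sigma_filtration[OF fil u'] space_sigma_filtration[OF fil u'])
  qed simp
qed

section \<open>Martingales under a change of measure\<close>

lemma set_integral_eq_on_sigma_sets:
  fixes f g :: "'a \<Rightarrow> 'b::{banach, second_countable_topology}"
  assumes stable: "Int_stable P" and P: "P \<subseteq> sets M" and space: "space M \<in> P"
    and f: "integrable M f" and g: "integrable M g"
    and eq: "\<And>A. A \<in> P \<Longrightarrow> (LINT \<omega>:A|M. f \<omega>) = (LINT \<omega>:A|M. g \<omega>)"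
    and H: "H \<in> sigma_sets (space M) P"
  shows "(LINT \<omega>:H|M. f \<omega>) = (LINT \<omega>:H|M. g \<omega>)"
proof -
  have set_int: "set_integrable M A h" if "A \<in> sets M" "integrable M h" for A and h :: "'a \<Rightarrow> 'b"
    unfolding set_integrable_def using that by (intro integrable_mult_indicator)
  have integral_Diff: "(LINT \<omega>:(space M - A)|M. h \<omega>) = (LINT \<omega>:space M|M. h \<omega>) - (LINT \<omega>:A|M. h \<omega>)"
    if "A \<in> sets M" "integrable M h" for A and h :: "'a \<Rightarrow> 'b"
    using set_integral_Un[where A="space M - A" and B=A and M=M and f=h] set_int[OF _ that(2)] that(1) sets.sets_into_space[OF that(1)]
    by (simp add: Un_absorb2 Diff_Int_distrib2)
  have sigma_P: "sigma_sets (space M) P \<subseteq> sets M" using P by (rule sets.sigma_sets_subset)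
  have "P \<subseteq> Pow (space M)" using P sets.sets_into_space by blast
  from stable this H show ?thesis
  proof (induct rule: sigma_sets_induct_disjoint)
    case (compl A)
    then show ?case using integral_Diff[of A f] integral_Diff[of A g] f g sigma_P eq[OF space] by auto
  next
    case (union A)
    then have A: "\<And>i. A i \<in> sets M" and dj: "\<And>i j. i \<noteq> j \<Longrightarrow> A i \<inter> A j = {}"
      using sigma_P unfolding disjoint_family_on_def by blast+
    then have "(\<Union>i. A i) \<in> sets M" by blast
    then show ?case
      using lebesgue_integral_countable_add[OF A dj set_int[OF _ f]]
        lebesgue_integral_countable_add[OF A dj set_int[OF _ g]] union(3) by simp
  qed (use P sets.sets_into_space eq in \<open>auto simp: set_lebesgue_integral_def\<close>)
qed

lemma (in prob_space) integral_indicator_times_indep_set: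
  fixes h :: "'a \<Rightarrow> real"
  assumes indep: "indep_set G H" and G: "sigma_algebra (space M) G" and H: "sigma_algebra (space M) H"
    and C: "C \<in> G" and h_H: "\<And>A. A \<in> sets borel \<Longrightarrow> h -` A \<inter> space M \<in> H"
    and int: "integrable M h"
  shows "(\<integral>\<omega>. indicator C \<omega> * h \<omega> \<partial>M) = prob C * (\<integral>\<omega>. h \<omega> \<partial>M)"
proof -
  have C_ev: "C \<in> events" using indep_setD_ev1[OF indep] C by blast
  have int_C: "integrable M (indicator C :: 'a \<Rightarrow> real)"
    using C_ev by (intro integrable_real_indicator) (auto simp: emeasure_eq_measure)
  have sub_G: "sigma_sets (space M) {(indicator C :: 'a \<Rightarrow> real) -` A \<inter> space M | A. A \<in> sets borel} \<subseteq> G"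
  proof (rule sigma_algebra.sigma_sets_subset[OF G], safe)
    fix A :: "real set"
    interpret G: sigma_algebra "space M" G by (rule G)
    have "(indicator C :: 'a \<Rightarrow> real) -` A \<inter> space M =
        (if 1 \<in> A then C else {}) \<union> (if 0 \<in> A then space M - C else {})"
      using C_ev sets.sets_into_space by (auto simp: indicator_def of_bool_def split: if_splits)
    then show "(indicator C :: 'a \<Rightarrow> real) -` A \<inter> space M \<in> G" using C by auto
  qed
  have sub_H: "sigma_sets (space M) {h -` A \<inter> space M | A. A \<in> sets borel} \<subseteq> H"
    by (rule sigma_algebra.sigma_sets_subset[OF H]) (use h_H in blast)
  have "indep_set (sigma_sets (space M) {(indicator C :: 'a \<Rightarrow> real) -` A \<inter> space M | A. A \<in> sets borel})
      (sigma_sets (space M) {h -` A \<inter> space M | A. A \<in> sets borel})"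
    using indep sub_G sub_H unfolding indep_sets2_eq by blast
  then have "indep_var borel (indicator C :: 'a \<Rightarrow> real) borel h"
    using C_ev int unfolding indep_var_eq by simp
  then show ?thesis using indep_var_lebesgue_integral[OF _ int_C int] C_ev by simp
qed

lemma (in prob_space) integral_indicator_scaleR_indep_set:
  fixes h :: "'a \<Rightarrow> real^'d"
  assumes indep: "indep_set G H" and G: "sigma_algebra (space M) G" and H: "sigma_algebra (space M) H"
    and C: "C \<in> G" and h_H: "\<And>A. A \<in> sets borel \<Longrightarrow> h -` A \<inter> space M \<in> H"
    and int: "integrable M h"
  shows "(\<integral>\<omega>. indicator C \<omega> *\<^sub>R h \<omega> \<partial>M) = prob C *\<^sub>R (\<integral>\<omega>. h \<omega> \<partial>M)"
proof (rule vec_eq_iff[THEN iffD2], rule allI)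
  fix i
  have C_ev: "C \<in> events" using indep_setD_ev1[OF indep] C by blast
  have int_C: "integrable M (\<lambda>\<omega>. indicator C \<omega> *\<^sub>R h \<omega>)"
    using C_ev int by (rule integrable_mult_indicator)
  have int_i: "integrable M (\<lambda>\<omega>. h \<omega> $ i)"
    using int by (rule integrable_bounded_linear[OF bounded_linear_vec_nth])
  have h_i_H: "(\<lambda>\<omega>. h \<omega> $ i) -` A \<inter> space M \<in> H" if A: "A \<in> sets borel" for A
  proof -
    have "(\<lambda>x::real^'d. x $ i) \<in> borel_measurable borel"
      by (intro borel_measurable_continuous_onI continuous_intros)
    then have "(\<lambda>x::real^'d. x $ i) -` A \<in> sets borel"
      using A by (metis measurable_sets space_borel vimage_Int Int_UNIV_right)
    then have "h -` ((\<lambda>x::real^'d. x $ i) -` A) \<inter> space M \<in> H" by (rule h_H)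
    then show ?thesis by (simp add: vimage_def)
  qed
  have "(\<integral>\<omega>. indicator C \<omega> *\<^sub>R h \<omega> \<partial>M) $ i = (\<integral>\<omega>. (indicator C \<omega> *\<^sub>R h \<omega>) $ i \<partial>M)"
    by (rule integral_bounded_linear[OF bounded_linear_vec_nth int_C, symmetric])
  also have "\<dots> = (\<integral>\<omega>. indicator C \<omega> * h \<omega> $ i \<partial>M)" by simp
  also have "\<dots> = prob C * (\<integral>\<omega>. h \<omega> $ i \<partial>M)"
    by (rule integral_indicator_times_indep_set[OF indep G H C h_i_H int_i])
  also have "(\<integral>\<omega>. h \<omega> $ i \<partial>M) = (\<integral>\<omega>. h \<omega> \<partial>M) $ i"
    by (rule integral_bounded_linear[OF bounded_linear_vec_nth int])
  finally show "(\<integral>\<omega>. indicator C \<omega> *\<^sub>R h \<omega> \<partial>M) $ i = (prob C *\<^sub>R (\<integral>\<omega>. h \<omega> \<partial>M)) $ i"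
    by simp
qed

lemma (in prob_space) set_integral_density_Int_indep:
  fixes Z :: "'a \<Rightarrow> real" and Y :: "'a \<Rightarrow> real^'d"
  assumes indep: "indep_set G H" and G: "sigma_algebra (space M) G" and H: "sigma_algebra (space M) H"
    and Z: "Z \<in> borel_measurable (sigma (space M) H)" and Z_nonneg: "\<And>\<omega>. 0 \<le> Z \<omega>"
    and Y: "Y \<in> borel_measurable (sigma (space M) H)"
    and int: "integrable (density M (\<lambda>\<omega>. ennreal (Z \<omega>))) Y"
    and A: "A \<in> H" and C: "C \<in> G"
  shows "(LINT \<omega>:(A \<inter> C)|density M (\<lambda>\<omega>. ennreal (Z \<omega>)). Y \<omega>)
    = prob C *\<^sub>R (LINT \<omega>:A|density M (\<lambda>\<omega>. ennreal (Z \<omega>)). Y \<omega>)"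
proof -
  let ?Q = "density M (\<lambda>\<omega>. ennreal (Z \<omega>))"
  have sets_H: "sets (sigma (space M) H) = H" and space_H: "space (sigma (space M) H) = space M"
    using H by (simp_all add: sigma_algebra.sets_measure_of_eq sigma_algebra.space_measure_of_eq)
  have sub: "subalgebra M (sigma (space M) H)"
    using indep_setD_ev2[OF indep] unfolding subalgebra_def sets_H space_H by simp
  have [measurable]: "A \<in> sets (sigma (space M) H)" using A sets_H by simp
  have [measurable]: "Y \<in> borel_measurable (sigma (space M) H)" "Z \<in> borel_measurable (sigma (space M) H)"
    using Y Z .
  let ?h = "\<lambda>\<omega>. Z \<omega> *\<^sub>R (indicator A \<omega> *\<^sub>R Y \<omega>)"
  have h_H: "?h \<in> borel_measurable (sigma (space M) H)" by measurable
  have Z_M: "Z \<in> borel_measurable M" using measurable_from_subalg[OF sub Z] .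
  have Y_M: "Y \<in> borel_measurable M" using measurable_from_subalg[OF sub Y] .
  have A_M: "A \<in> sets M" using A indep_setD_ev2[OF indep] by blast
  have C_M: "C \<in> sets M" using C indep_setD_ev1[OF indep] by blast
  have h_H': "?h -` U \<inter> space M \<in> H" if "U \<in> sets borel" for U
    using measurable_sets[OF h_H that] by (simp add: sets_H space_H)
  have density_integral: "(LINT \<omega>:B|?Q. Y \<omega>) = (\<integral>\<omega>. Z \<omega> *\<^sub>R (indicator B \<omega> *\<^sub>R Y \<omega>) \<partial>M)"
    if "B \<in> sets M" for B
    unfolding set_lebesgue_integral_def using that Y_M Z_M Z_nonneg by (intro integral_density) auto
  have "integrable ?Q (\<lambda>\<omega>. indicator A \<omega> *\<^sub>R Y \<omega>)"
    using A_M int by (intro integrable_mult_indicator) auto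
  then have int_h: "integrable M ?h"
    using integrable_density[of "\<lambda>\<omega>. indicator A \<omega> *\<^sub>R Y \<omega>" M Z] A_M Y_M Z_M Z_nonneg by simp
  have "(LINT \<omega>:(A \<inter> C)|?Q. Y \<omega>) = (\<integral>\<omega>. indicator C \<omega> *\<^sub>R ?h \<omega> \<partial>M)"
    unfolding density_integral[OF sets.Int[OF A_M C_M]]
    by (rule Bochner_Integration.integral_cong[OF refl]) (simp add: indicator_inter_arith)
  also have "\<dots> = prob C *\<^sub>R (\<integral>\<omega>. ?h \<omega> \<partial>M)"
    by (rule integral_indicator_scaleR_indep_set[OF indep G H C h_H' int_h])
  also have "(\<integral>\<omega>. ?h \<omega> \<partial>M) = (LINT \<omega>:A|?Q. Y \<omega>)"
    by (rule density_integral[OF A_M, symmetric])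
  finally show ?thesis .
qed

lemma
  assumes A: "sigma_algebra \<Omega> A" and B: "sigma_algebra \<Omega> B"
  shows Int_stable_Int_family: "Int_stable {a \<inter> b | a b. a \<in> A \<and> b \<in> B}"
    and sigma_sets_Un_subset_Int_family: "sigma_sets \<Omega> (A \<union> B) \<subseteq> sigma_sets \<Omega> {a \<inter> b | a b. a \<in> A \<and> b \<in> B}"
proof -
  interpret A: sigma_algebra \<Omega> A by (rule A)
  interpret B: sigma_algebra \<Omega> B by (rule B)
  show "Int_stable {a \<inter> b | a b. a \<in> A \<and> b \<in> B}"
    unfolding Int_stable_def
  proof safe
    fix a b a' b' assume "a \<in> A" "b \<in> B" "a' \<in> A" "b' \<in> B"
    then show "\<exists>a'' b''. a \<inter> b \<inter> (a' \<inter> b') = a'' \<inter> b'' \<and> a'' \<in> A \<and> b'' \<in> B"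
      by (intro exI[of _ "a \<inter> a'"] exI[of _ "b \<inter> b'"]) auto
  qed
  have "c \<in> {a \<inter> b | a b. a \<in> A \<and> b \<in> B}" if c: "c \<in> A \<union> B" for c
  proof -
    have "c = c \<inter> \<Omega>" "c = \<Omega> \<inter> c" using c A.sets_into_space B.sets_into_space by auto
    then show ?thesis using c A.top B.top by blast
  qed
  then show "sigma_sets \<Omega> (A \<union> B) \<subseteq> sigma_sets \<Omega> {a \<inter> b | a b. a \<in> A \<and> b \<in> B}"
    by (intro sigma_sets_mono') blast
qed

text \<open>The density and the process only see \<open>F T\<close>, which is independent of \<open>G T\<close>; hence an event of
  \<open>G T\<close> factors out of every integral, and the martingale property on the \<open>\<inter>\<close>-stable generator
  \<open>{A \<inter> C}\<close> of \<open>F s \<or> G s\<close> extends to the join.\<close>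

lemma martingale_on_join_independent:
  fixes Z :: "'a \<Rightarrow> real" and X :: "real \<Rightarrow> 'a \<Rightarrow> real^'d"
  assumes "prob_space M" and fil: "filtration_on M T F"
    and G: "\<And>t. t \<in> {0..T} \<Longrightarrow> sigma_algebra (space M) (G t)"
    and G_T: "\<And>t. t \<in> {0..T} \<Longrightarrow> G t \<subseteq> G T"
    and indep: "prob_space.indep_set M (G T) (F T)"
    and Z: "Z \<in> borel_measurable (sigma (space M) (F T))" and Z_nonneg: "\<And>\<omega>. 0 \<le> Z \<omega>"
    and mart: "martingale_on (density M (\<lambda>\<omega>. ennreal (Z \<omega>))) T F X"
  shows "martingale_on (density M (\<lambda>\<omega>. ennreal (Z \<omega>))) T (\<lambda>t. join_sa M (F t) (G t)) X"
proof -
  interpret prob_space M by fact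
  let ?Q = "density M (\<lambda>\<omega>. ennreal (Z \<omega>))"
  have adapted: "adapted_on M T F X"
    using mart unfolding martingale_on_def adapted_on_def by simp
  have int: "\<And>t. t \<in> {0..T} \<Longrightarrow> integrable ?Q (X t)"
    and mart_F: "\<And>s t A. 0 \<le> s \<Longrightarrow> s \<le> t \<Longrightarrow> t \<le> T \<Longrightarrow> A \<in> F s \<Longrightarrow>
      (LINT \<omega>:A|?Q. X t \<omega>) = (LINT \<omega>:A|?Q. X s \<omega>)"
    using mart unfolding martingale_on_def by blast+
  have "(LINT \<omega>:H|?Q. X t \<omega>) = (LINT \<omega>:H|?Q. X s \<omega>)"
    if s: "0 \<le> s" "s \<le> t" and t: "t \<le> T" and H: "H \<in> join_sa M (F s) (G s)" for s t H
  proof -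
    have s': "s \<in> {0..T}" and t': "t \<in> {0..T}" and T: "T \<in> {0..T}" using s t by auto
    note F_s = filtration_on_sigma_algebra[OF fil s'] and F_T = filtration_on_sigma_algebra[OF fil T]
    let ?P = "{A \<inter> C | A C. A \<in> F s \<and> C \<in> G s}"
    have "?P \<subseteq> sets ?Q"
      using filtration_on_sets[OF fil s'] G_T[OF s'] indep_setD_ev1[OF indep] by auto
    moreover have "space ?Q \<in> ?P"
    proof -
      interpret Fs: sigma_algebra "space M" "F s" by (rule F_s)
      interpret Gs: sigma_algebra "space M" "G s" by (rule G[OF s'])
      show ?thesis by auto
    qed
    moreover have "(LINT \<omega>:A|?Q. X t \<omega>) = (LINT \<omega>:A|?Q. X s \<omega>)" if "A \<in> ?P" for A
    proof -
      obtain A' C where A: "A = A' \<inter> C" "A' \<in> F s" "C \<in> G s" using \<open>A \<in> ?P\<close> by blast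
      then have "A' \<in> F T" "C \<in> G T" using filtration_on_mono[OF fil T, of s] G_T[OF s'] s' by auto
      have factor: "(LINT \<omega>:(A' \<inter> C)|?Q. X r \<omega>) = prob C *\<^sub>R (LINT \<omega>:A'|?Q. X r \<omega>)"
        if r: "r \<in> {0..T}" for r
      proof -
        have "X r \<in> borel_measurable (sigma (space M) (F T))"
          using adapted_on_measurable[OF fil adapted r, of T] r by simp
        then show ?thesis
          by (rule set_integral_density_Int_indep[OF indep G[OF T] F_T Z Z_nonneg _ int[OF r]
              \<open>A' \<in> F T\<close> \<open>C \<in> G T\<close>])
      qed
      show ?thesis using factor[OF t'] factor[OF s'] mart_F[OF s t A(2)] A(1) s' t' by simp
    qed
    moreover have "H \<in> sigma_sets (space ?Q) ?P"
      using sigma_sets_Un_subset_Int_family[OF F_s G[OF s']] H unfolding join_sa_def by auto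
    ultimately show ?thesis
      by (rule set_integral_eq_on_sigma_sets[OF Int_stable_Int_family[OF F_s G[OF s']] _ _ int[OF t'] int[OF s']])
  qed
  moreover have "adapted_on ?Q T (\<lambda>t. join_sa M (F t) (G t)) X"
    unfolding adapted_on_def
  proof (intro ballI)
    fix t and A :: "(real^'d) set" assume "t \<in> {0..T}" "A \<in> sets borel"
    then have "X t -` A \<inter> space M \<in> F t" using adapted unfolding adapted_on_def by blast
    then show "X t -` A \<inter> space ?Q \<in> join_sa M (F t) (G t)"
      unfolding join_sa_def by (simp add: sigma_sets.Basic)
  qed
  ultimately show ?thesis using int unfolding martingale_on_def by blast
qed

lemma restr_to_subalg_eq_if_agree:
  assumes sub: "subalgebra M N" and sets_eq: "sets Q = sets M"
    and agree: "\<forall>A\<in>sets N. emeasure Q A = emeasure M A"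
  shows "restr_to_subalg Q N = restr_to_subalg M N"
proof -
  have subQ: "subalgebra Q N"
    using sub sets_eq sets_eq_imp_space_eq[OF sets_eq] by (simp add: subalgebra_def)
  show ?thesis
    by (rule measure_eqI) (simp_all add: sets_restr_to_subalg[OF subQ] sets_restr_to_subalg[OF sub]
        emeasure_restr_to_subalg[OF subQ] emeasure_restr_to_subalg[OF sub] agree)
qed

lemma
  fixes h :: "'a \<Rightarrow> 'b::{banach, second_countable_topology}"
  assumes sub: "subalgebra M N" and sets_eq: "sets Q = sets M"
    and agree: "\<forall>A\<in>sets N. emeasure Q A = emeasure M A"
    and h: "h \<in> borel_measurable N"
  shows integral_eq_if_agree_on_subalgebra: "(\<integral>\<omega>. h \<omega> \<partial>Q) = (\<integral>\<omega>. h \<omega> \<partial>M)"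
    and integrable_if_agree_on_subalgebra: "integrable M h \<Longrightarrow> integrable Q h"
proof -
  have subQ: "subalgebra Q N"
    using sub sets_eq sets_eq_imp_space_eq[OF sets_eq] by (simp add: subalgebra_def)
  note restr = restr_to_subalg_eq_if_agree[OF sub sets_eq agree]
  show "(\<integral>\<omega>. h \<omega> \<partial>Q) = (\<integral>\<omega>. h \<omega> \<partial>M)"
    using integral_subalgebra2[OF subQ h] integral_subalgebra2[OF sub h] restr by simp
  show "integrable Q h" if "integrable M h"
    using integrable_from_subalg[OF subQ] integrable_in_subalg[OF sub h that] restr by simp
qed

lemma set_integral_eq_if_agree_on_subalgebra:
  fixes h :: "'a \<Rightarrow> 'b::{banach, second_countable_topology}"
  assumes sub: "subalgebra M N" and sets_eq: "sets Q = sets M"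
    and agree: "\<forall>A\<in>sets N. emeasure Q A = emeasure M A"
    and A: "A \<in> sets N" and h: "h \<in> borel_measurable N"
  shows "(LINT \<omega>:A|Q. h \<omega>) = (LINT \<omega>:A|M. h \<omega>)"
  unfolding set_lebesgue_integral_def
  by (intro integral_eq_if_agree_on_subalgebra[OF sub sets_eq agree] borel_measurable_scaleR
      borel_measurable_indicator A h)

text \<open>Stopped at \<open>\<tau>\<close>, the process is frozen after \<open>\<tau>\<close> and \<open>F_at\<close>-measurable, so a change of
  measure that is invisible on \<open>F_at\<close> cannot affect the martingale property.\<close>

locale stopped_change_of_measure =
  fixes M Q :: "'a measure" and T :: real and F :: "real \<Rightarrow> 'a set set" and \<tau> :: "'a \<Rightarrow> real"
    and X :: "real \<Rightarrow> 'a \<Rightarrow> real^'d"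
  assumes filtration: "filtration_on M T F" and T_nonneg: "0 \<le> T" and stop: "stop_time M T F \<tau>"
    and mart: "martingale_on M T F (\<lambda>t \<omega>. X (min t (\<tau> \<omega>)) \<omega>)"
    and sets_eq: "sets Q = sets M"
    and agree: "\<forall>A\<in>sets (sigma (space M) (F_at M T F \<tau>)). emeasure Q A = emeasure M A"
begin

abbreviation "X\<^sub>\<tau> t \<omega> \<equiv> X (min t (\<tau> \<omega>)) \<omega>"

lemma subalgebra_F_at: "subalgebra M (sigma (space M) (F_at M T F \<tau>))"
  by (rule subalgebra_M_sigma_F_at[OF filtration T_nonneg])

lemma adapted: "adapted_on M T F X\<^sub>\<tau>"
  using mart unfolding martingale_on_def by blast

lemma measurable_F_at: "t \<in> {0..T} \<Longrightarrow> X\<^sub>\<tau> t \<in> borel_measurable (sigma (space M) (F_at M T F \<tau>))"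
  by (rule stopped_process_measurable_F_at[OF filtration T_nonneg stop adapted])

lemma integrable_Q: "t \<in> {0..T} \<Longrightarrow> integrable Q (X\<^sub>\<tau> t)"
  using mart unfolding martingale_on_def
  by (intro integrable_if_agree_on_subalgebra[OF subalgebra_F_at sets_eq agree measurable_F_at]) auto

lemma set_integral_Q:
  assumes s: "0 \<le> s" "s \<le> t" and t: "t \<le> T" and A: "A \<in> F s"
  shows "(LINT \<omega>:A|Q. X\<^sub>\<tau> t \<omega>) = (LINT \<omega>:A|Q. X\<^sub>\<tau> s \<omega>)"
proof -
  have s': "s \<in> {0..T}" and t': "t \<in> {0..T}" using s t by auto
  define A1 where "A1 = {\<omega>\<in>A. \<tau> \<omega> \<le> s}"
  define A2 where "A2 = {\<omega>\<in>A. s < \<tau> \<omega>}"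
  have A2_F_at: "A2 \<in> sets (sigma (space M) (F_at M T F \<tau>))"
    unfolding A2_def using not_stopped_in_F_at[OF filtration stop s' A]
    by (simp add: sets_sigma_F_at[OF filtration T_nonneg] sigma_sets.Basic)
  then have A2_M: "A2 \<in> sets M" using subalgebra_F_at by (auto simp: subalgebra_def)
  have "A1 = A - A2" unfolding A1_def A2_def by auto
  then have A1_M: "A1 \<in> sets M" using A filtration_on_sets[OF filtration s'] A2_M by auto
  have split: "A = A1 \<union> A2" "A1 \<inter> A2 = {}" unfolding A1_def A2_def by auto
  have set_int: "set_integrable Q B (X\<^sub>\<tau> r)" if "B \<in> sets M" "r \<in> {0..T}" for B r
    unfolding set_integrable_def using that sets_eq by (intro integrable_mult_indicator integrable_Q) auto
  have frozen: "(LINT \<omega>:A1|Q. X\<^sub>\<tau> t \<omega>) = (LINT \<omega>:A1|Q. X\<^sub>\<tau> s \<omega>)"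
    unfolding set_lebesgue_integral_def
  proof (rule Bochner_Integration.integral_cong)
    fix \<omega> show "indicator A1 \<omega> *\<^sub>R X\<^sub>\<tau> t \<omega> = indicator A1 \<omega> *\<^sub>R X\<^sub>\<tau> s \<omega>"
      using s by (cases "\<omega> \<in> A1") (auto simp: A1_def min_absorb2)
  qed simp
  note agree_on_A2 = set_integral_eq_if_agree_on_subalgebra[OF subalgebra_F_at sets_eq agree A2_F_at]
  have "(LINT \<omega>:A2|Q. X\<^sub>\<tau> t \<omega>) = (LINT \<omega>:A2|M. X\<^sub>\<tau> t \<omega>)"
    by (rule agree_on_A2[OF measurable_F_at[OF t']])
  also have "\<dots> = (LINT \<omega>:A2|M. X\<^sub>\<tau> s \<omega>)"
    using mart s t not_stopped_in_F[OF filtration stop s' A] unfolding martingale_on_def A2_def by blast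
  also have "\<dots> = (LINT \<omega>:A2|Q. X\<^sub>\<tau> s \<omega>)"
    by (rule agree_on_A2[OF measurable_F_at[OF s'], symmetric])
  finally have moving: "(LINT \<omega>:A2|Q. X\<^sub>\<tau> t \<omega>) = (LINT \<omega>:A2|Q. X\<^sub>\<tau> s \<omega>)" .
  show ?thesis
    unfolding split(1) using set_integral_Un[OF split(2) set_int[OF A1_M t'] set_int[OF A2_M t']]
      set_integral_Un[OF split(2) set_int[OF A1_M s'] set_int[OF A2_M s']] frozen moving by simp
qed

lemma martingale_on_Q: "martingale_on Q T F X\<^sub>\<tau>"
  using adapted integrable_Q set_integral_Q
  unfolding martingale_on_def adapted_on_def sets_eq_imp_space_eq[OF sets_eq] by blast

end

section \<open>Reweighting conditionally on a sub-\<sigma>-algebra\<close>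

lemma tv_norm_diff_le_twice_measure:
  assumes "finite_measure Q" "finite_measure M" and sets_eq: "sets Q = sets M" and B: "B \<in> sets M"
    and outside: "\<And>A. A \<in> sets M \<Longrightarrow> measure Q (A - B) = measure M (A - B)"
    and on_B: "measure Q B = measure M B"
  shows "tv_norm_diff Q M \<le> 2 * measure M B"
  unfolding tv_norm_diff_def
proof (rule cSUP_least)
  show "{\<A>. finite \<A> \<and> \<A> \<subseteq> sets M \<and> disjoint \<A>} \<noteq> {}"
    by (auto intro!: exI[of _ "{}"] simp: disjoint_def)
next
  interpret Q: finite_measure Q by fact
  interpret M: finite_measure M by fact
  fix \<A> assume "\<A> \<in> {\<A>. finite \<A> \<and> \<A> \<subseteq> sets M \<and> disjoint \<A>}"
  then have fin: "finite \<A>" and sub: "\<A> \<subseteq> sets M" and dis: "disjoint \<A>" by auto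
  have each: "\<bar>measure Q A - measure M A\<bar> \<le> measure Q (A \<inter> B) + measure M (A \<inter> B)"
    if A: "A \<in> sets M" for A
  proof -
    have split: "A = (A \<inter> B) \<union> (A - B)" "(A \<inter> B) \<inter> (A - B) = {}" by auto
    have "measure Q A = measure Q (A \<inter> B) + measure Q (A - B)"
      using Q.finite_measure_Union[of "A \<inter> B" "A - B"] A B sets_eq split by simp
    moreover have "measure M A = measure M (A \<inter> B) + measure M (A - B)"
      using M.finite_measure_Union[of "A \<inter> B" "A - B"] A B split by simp
    ultimately show ?thesis using outside[OF A] by (simp add: abs_le_iff)
  qed
  have dj: "disjoint_family_on (\<lambda>A. A \<inter> B) \<A>"
    using dis unfolding disjoint_family_on_def disjoint_def by auto
  have im: "(\<lambda>A. A \<inter> B) ` \<A> \<subseteq> sets M" using sub B by auto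
  have "(\<Sum>A\<in>\<A>. \<bar>measure Q A - measure M A\<bar>) \<le> (\<Sum>A\<in>\<A>. measure Q (A \<inter> B)) + (\<Sum>A\<in>\<A>. measure M (A \<inter> B))"
    unfolding sum.distrib[symmetric] using sub each by (intro sum_mono) auto
  also have "(\<Sum>A\<in>\<A>. measure Q (A \<inter> B)) = measure Q (\<Union>A\<in>\<A>. A \<inter> B)"
    using Q.finite_measure_finite_Union[OF fin _ dj] im sets_eq by simp
  also have "(\<Sum>A\<in>\<A>. measure M (A \<inter> B)) = measure M (\<Union>A\<in>\<A>. A \<inter> B)"
    using M.finite_measure_finite_Union[OF fin im dj] by simp
  also have "measure Q (\<Union>A\<in>\<A>. A \<inter> B) \<le> measure Q B"
    using B sets_eq by (intro Q.finite_measure_mono) auto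
  also have "measure M (\<Union>A\<in>\<A>. A \<inter> B) \<le> measure M B"
    using B by (intro M.finite_measure_mono) auto
  finally show "(\<Sum>A\<in>\<A>. \<bar>measure Q A - measure M A\<bar>) \<le> 2 * measure M B"
    using on_B by simp
qed

lemma (in sigma_finite_subalgebra) nn_cond_exp_le_1:
  assumes "g \<in> borel_measurable M" and "\<And>x. x \<in> space M \<Longrightarrow> g x \<le> 1"
  shows "AE \<omega> in M. nn_cond_exp M F g \<omega> \<le> 1"
proof -
  have "AE \<omega> in M. nn_cond_exp M F g \<omega> \<le> nn_cond_exp M F (\<lambda>_. 1) \<omega>"
    using assms by (intro nn_cond_exp_mono) (auto intro: AE_I2)
  moreover have "AE \<omega> in M. (\<lambda>_. 1::ennreal) \<omega> = nn_cond_exp M F (\<lambda>_. 1) \<omega>"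
    by (rule nn_cond_exp_F_meas) simp
  ultimately show ?thesis by eventually_elim simp
qed

locale conditional_reweighting = prob_space M
  for M :: "'a measure" +
  fixes N \<A> :: "'a measure" and B E :: "'a set" and f :: "'a \<Rightarrow> ennreal"
  assumes subalgebra_N: "subalgebra M N" and subalgebra_A: "subalgebra N \<A>"
    and B_sets: "B \<in> sets \<A>" and E_sets: "E \<in> sets N"
    and cond_prob_E_pos: "AE \<omega> in M. nn_cond_exp M \<A> (indicator E) \<omega> > 0"
    and f_measurable: "f \<in> borel_measurable N"
    and f_finite: "\<And>\<omega>. \<omega> \<in> space M \<Longrightarrow> f \<omega> < \<top>"
    and f_on_E: "\<And>\<omega>. \<omega> \<in> E \<Longrightarrow> f \<omega> \<le> 1"
    and f_outside_B: "\<And>\<omega>. \<omega> \<in> space M \<Longrightarrow> \<omega> \<notin> B \<Longrightarrow> f \<omega> = 0"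
begin

definition "cond_prob_E = nn_cond_exp M \<A> (indicator E)"
definition "damp \<omega> = inverse (1 + f \<omega>)"
definition "cond_damp = nn_cond_exp M \<A> damp"
definition "dens \<omega> =
  (if \<omega> \<in> B then (indicator E \<omega> * inverse (cond_prob_E \<omega>) + damp \<omega>) * inverse (1 + cond_damp \<omega>) else 1)"
definition "Q = density M dens"

lemma subalgebra_M_A: "subalgebra M \<A>"
  using subalgebra_N subalgebra_A by (auto simp: subalgebra_def)

lemma sigma_finite_subalgebra_A: "sigma_finite_subalgebra M \<A>"
  by (intro finite_measure_subalgebra_is_sigma_finite finite_measure_subalgebra.intro
      finite_measure_subalgebra_axioms.intro finite_measure_axioms subalgebra_M_A)

lemma measurable_A_N: "h \<in> borel_measurable \<A> \<Longrightarrow> h \<in> borel_measurable N"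
  by (rule measurable_from_subalg[OF subalgebra_A])

lemma measurable_N_M: "h \<in> borel_measurable N \<Longrightarrow> h \<in> borel_measurable M"
  by (rule measurable_from_subalg[OF subalgebra_N])

lemma sets_A_M: "A \<in> sets \<A> \<Longrightarrow> A \<in> sets M"
  using subalgebra_M_A by (auto simp: subalgebra_def)

lemma E_M[measurable]: "E \<in> sets M"
  using E_sets subalgebra_N by (auto simp: subalgebra_def)

lemma B_M[measurable]: "B \<in> sets M"
  by (rule sets_A_M[OF B_sets])

lemma cond_prob_E_A[measurable]: "cond_prob_E \<in> borel_measurable \<A>"
  and cond_damp_A[measurable]: "cond_damp \<in> borel_measurable \<A>"
  unfolding cond_prob_E_def cond_damp_def by simp_all

lemma damp_N: "damp \<in> borel_measurable N"
  unfolding damp_def[abs_def] using f_measurable by measurable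

lemma dens_N: "dens \<in> borel_measurable N"
proof -
  have [measurable]: "cond_prob_E \<in> borel_measurable N" "cond_damp \<in> borel_measurable N" "damp \<in> borel_measurable N"
    "B \<in> sets N" "E \<in> sets N"
    using measurable_A_N[OF cond_prob_E_A] measurable_A_N[OF cond_damp_A] damp_N E_sets B_sets subalgebra_A
    by (auto simp: subalgebra_def)
  show ?thesis unfolding dens_def[abs_def] by measurable
qed

lemma damp_M[measurable]: "damp \<in> borel_measurable M"
  and dens_M[measurable]: "dens \<in> borel_measurable M"
  and cond_prob_E_M[measurable]: "cond_prob_E \<in> borel_measurable M"
  and cond_damp_M[measurable]: "cond_damp \<in> borel_measurable M"
  using measurable_N_M[OF damp_N] measurable_N_M[OF dens_N]
    measurable_N_M[OF measurable_A_N[OF cond_prob_E_A]] measurable_N_M[OF measurable_A_N[OF cond_damp_A]]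
  by auto

lemma cond_prob_E_pos_le_1: "AE \<omega> in M. 0 < cond_prob_E \<omega> \<and> cond_prob_E \<omega> \<le> 1"
  using cond_prob_E_pos sigma_finite_subalgebra.nn_cond_exp_le_1[OF sigma_finite_subalgebra_A, of "indicator E"]
  unfolding cond_prob_E_def by (auto simp: indicator_def elim: eventually_mono)

lemma cond_damp_le_1: "AE \<omega> in M. cond_damp \<omega> \<le> 1"
  unfolding cond_damp_def damp_def
  by (rule sigma_finite_subalgebra.nn_cond_exp_le_1[OF sigma_finite_subalgebra_A])
    (use damp_M[unfolded damp_def[abs_def]] ennreal_inverse_one_plus_le in auto)

lemma nn_integral_indicator_div_cond_prob:
  assumes "h \<in> borel_measurable \<A>"
  shows "(\<integral>\<^sup>+\<omega>. h \<omega> * inverse (cond_prob_E \<omega>) * indicator E \<omega> \<partial>M) = (\<integral>\<^sup>+\<omega>. h \<omega> \<partial>M)"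
proof -
  have "(\<integral>\<^sup>+\<omega>. h \<omega> * inverse (cond_prob_E \<omega>) * indicator E \<omega> \<partial>M)
      = (\<integral>\<^sup>+\<omega>. h \<omega> * inverse (cond_prob_E \<omega>) * cond_prob_E \<omega> \<partial>M)"
    unfolding cond_prob_E_def using assms
    by (intro sigma_finite_subalgebra.nn_cond_exp_intg[OF sigma_finite_subalgebra_A, symmetric])
      (auto simp: cond_prob_E_def[symmetric])
  also have "\<dots> = (\<integral>\<^sup>+\<omega>. h \<omega> \<partial>M)"
  proof (intro nn_integral_cong_AE, use cond_prob_E_pos_le_1 in eventually_elim)
    case (elim \<omega>)
    then have "inverse (cond_prob_E \<omega>) * cond_prob_E \<omega> = 1"
      by (intro ennreal_inverse_mult_self) (auto simp: top_unique)
    then show ?case by (simp add: mult.assoc)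
  qed
  finally show ?thesis .
qed

lemma nn_integral_times_dens:
  assumes g: "g \<in> borel_measurable \<A>"
  shows "(\<integral>\<^sup>+\<omega>. g \<omega> * dens \<omega> \<partial>M) = (\<integral>\<^sup>+\<omega>. g \<omega> \<partial>M)"
proof -
  have [measurable]: "g \<in> borel_measurable M" using measurable_N_M[OF measurable_A_N[OF g]] .
  have [measurable]: "B \<in> sets \<A>" by (rule B_sets)
  define h where "h \<omega> = g \<omega> * indicator B \<omega> * inverse (1 + cond_damp \<omega>)" for \<omega>
  have h_A: "h \<in> borel_measurable \<A>" unfolding h_def[abs_def] using g by measurable
  then have [measurable]: "h \<in> borel_measurable M" using measurable_N_M[OF measurable_A_N] by blast
  have "(\<integral>\<^sup>+\<omega>. g \<omega> * dens \<omega> \<partial>M) = (\<integral>\<^sup>+\<omega>. g \<omega> * indicator (space M - B) \<omega> +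
      h \<omega> * inverse (cond_prob_E \<omega>) * indicator E \<omega> + h \<omega> * damp \<omega> \<partial>M)"
    by (intro nn_integral_cong) (auto simp: dens_def h_def algebra_simps)
  also have "\<dots> = (\<integral>\<^sup>+\<omega>. g \<omega> * indicator (space M - B) \<omega> \<partial>M) +
      (\<integral>\<^sup>+\<omega>. h \<omega> * inverse (cond_prob_E \<omega>) * indicator E \<omega> \<partial>M) + (\<integral>\<^sup>+\<omega>. h \<omega> * damp \<omega> \<partial>M)"
    by (simp add: nn_integral_add)
  also have "(\<integral>\<^sup>+\<omega>. h \<omega> * inverse (cond_prob_E \<omega>) * indicator E \<omega> \<partial>M) = (\<integral>\<^sup>+\<omega>. h \<omega> \<partial>M)"
    by (rule nn_integral_indicator_div_cond_prob[OF h_A])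
  also have "(\<integral>\<^sup>+\<omega>. h \<omega> * damp \<omega> \<partial>M) = (\<integral>\<^sup>+\<omega>. h \<omega> * cond_damp \<omega> \<partial>M)"
    unfolding cond_damp_def using h_A
    by (intro sigma_finite_subalgebra.nn_cond_exp_intg[OF sigma_finite_subalgebra_A, symmetric]) auto
  also have "(\<integral>\<^sup>+\<omega>. g \<omega> * indicator (space M - B) \<omega> \<partial>M) + (\<integral>\<^sup>+\<omega>. h \<omega> \<partial>M) + (\<integral>\<^sup>+\<omega>. h \<omega> * cond_damp \<omega> \<partial>M)
      = (\<integral>\<^sup>+\<omega>. g \<omega> * indicator (space M - B) \<omega> + h \<omega> * (1 + cond_damp \<omega>) \<partial>M)"
    by (simp add: nn_integral_add distrib_left add.assoc)
  also have "\<dots> = (\<integral>\<^sup>+\<omega>. g \<omega> \<partial>M)"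
  proof (intro nn_integral_cong_AE, use cond_damp_le_1 AE_space in eventually_elim)
    case (elim \<omega>)
    then have "inverse (1 + cond_damp \<omega>) * (1 + cond_damp \<omega>) = 1"
      by (intro ennreal_inverse_mult_self) (auto simp: top_unique)
    then show ?case using elim by (cases "\<omega> \<in> B") (simp_all add: h_def mult.assoc)
  qed
  finally show ?thesis .
qed

lemma emeasure_Q_A: "A \<in> sets \<A> \<Longrightarrow> emeasure Q A = emeasure M A"
  using nn_integral_times_dens[of "indicator A"] sets_A_M[of A]
  by (simp add: Q_def emeasure_density mult.commute)

lemma emeasure_Q_outside:
  assumes "A \<in> sets M"
  shows "emeasure Q (A - B) = emeasure M (A - B)"
proof -
  have "emeasure Q (A - B) = (\<integral>\<^sup>+\<omega>. dens \<omega> * indicator (A - B) \<omega> \<partial>M)"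
    using assms unfolding Q_def by (simp add: emeasure_density)
  also have "\<dots> = (\<integral>\<^sup>+\<omega>. indicator (A - B) \<omega> \<partial>M)"
    by (intro nn_integral_cong) (auto simp: dens_def indicator_def)
  finally show ?thesis using assms by simp
qed

lemma prob_space_Q: "prob_space Q"
proof
  have "space M \<in> sets \<A>" using subalgebra_M_A by (metis sets.top subalgebra_def)
  then have "emeasure Q (space M) = 1" using emeasure_Q_A emeasure_space_1 by simp
  then show "emeasure Q (space Q) = 1" by (simp add: Q_def)
qed

lemma dens_pos: "AE \<omega> in M. 0 < dens \<omega>"
  using cond_damp_le_1 AE_space
proof eventually_elim
  case (elim \<omega>)
  have "0 < damp \<omega>" using f_finite[OF elim(2)] by (simp add: damp_def ennreal_inverse_positive)
  then have "0 < indicator E \<omega> * inverse (cond_prob_E \<omega>) + damp \<omega>"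
    by (metis add_eq_0_iff_both_eq_0 not_gr_zero)
  moreover have "0 < inverse (1 + cond_damp \<omega>)"
    using elim(1) by (auto simp: ennreal_inverse_positive top_unique)
  ultimately show ?case by (simp add: dens_def ennreal_zero_less_mult_iff)
qed

lemma equiv_measure_Q: "equiv_measure Q M"
  unfolding equiv_measure_def
proof (intro conjI)
  show "sets Q = sets M" by (simp add: Q_def)
  show "absolutely_continuous M Q" unfolding Q_def by (rule absolutely_continuousI_density) simp
  show "absolutely_continuous Q M" unfolding absolutely_continuous_def
  proof
    fix A assume A: "A \<in> null_sets Q"
    then have A_M: "A \<in> sets M" using null_setsD2[OF A] by (simp add: Q_def)
    then have "AE \<omega> in M. dens \<omega> * indicator A \<omega> = 0"
      using A by (simp add: Q_def emeasure_density nn_integral_0_iff_AE null_sets_def)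
    then have "AE \<omega> in M. \<omega> \<notin> A" using dens_pos by eventually_elim (auto simp: indicator_def)
    then show "A \<in> null_sets M" using A_M by (simp add: AE_iff_null_sets)
  qed
qed

lemma nn_integral_f_Q: "(\<integral>\<^sup>+\<omega>. f \<omega> \<partial>Q) \<le> 2 * emeasure M B"
proof -
  have [measurable]: "f \<in> borel_measurable M" by (rule measurable_N_M[OF f_measurable])
  have [measurable]: "B \<in> sets \<A>" by (rule B_sets)
  have "(\<integral>\<^sup>+\<omega>. f \<omega> \<partial>Q) = (\<integral>\<^sup>+\<omega>. dens \<omega> * f \<omega> \<partial>M)"
    unfolding Q_def by (rule nn_integral_density) auto
  also have "\<dots> \<le> (\<integral>\<^sup>+\<omega>. indicator B \<omega> * inverse (cond_prob_E \<omega>) * indicator E \<omega> + indicator B \<omega> \<partial>M)"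
  proof (rule nn_integral_mono)
    fix \<omega> assume \<omega>: "\<omega> \<in> space M"
    show "dens \<omega> * f \<omega> \<le> indicator B \<omega> * inverse (cond_prob_E \<omega>) * indicator E \<omega> + indicator B \<omega>"
    proof (cases "\<omega> \<in> B")
      case True
      have "indicator E \<omega> * f \<omega> \<le> indicator E \<omega>" using f_on_E by (cases "\<omega> \<in> E") auto
      moreover have "damp \<omega> * f \<omega> \<le> 1"
        using f_finite[OF \<omega>] unfolding damp_def by (intro ennreal_inverse_one_plus_mult_le) simp
      moreover have "inverse (1 + cond_damp \<omega>) \<le> 1" by (rule ennreal_inverse_one_plus_le)
      ultimately have "(indicator E \<omega> * f \<omega> * inverse (cond_prob_E \<omega>) + damp \<omega> * f \<omega>) * inverse (1 + cond_damp \<omega>)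
          \<le> (indicator E \<omega> * inverse (cond_prob_E \<omega>) + 1) * 1"
        by (intro mult_mono add_mono mult_right_mono) auto
      then show ?thesis using True by (simp add: dens_def algebra_simps)
    qed (simp add: f_outside_B[OF \<omega>])
  qed
  also have "\<dots> = (\<integral>\<^sup>+\<omega>. indicator B \<omega> * inverse (cond_prob_E \<omega>) * indicator E \<omega> \<partial>M) + emeasure M B"
    by (subst nn_integral_add) auto
  also have "(\<integral>\<^sup>+\<omega>. indicator B \<omega> * inverse (cond_prob_E \<omega>) * indicator E \<omega> \<partial>M) = emeasure M B"
    using nn_integral_indicator_div_cond_prob[of "indicator B"] by simp
  finally show ?thesis by (simp add: mult_2)
qed

lemma Q_density_enn2real: "Q = density M (\<lambda>\<omega>. ennreal (enn2real (dens \<omega>)))"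
proof -
  have "(\<integral>\<^sup>+\<omega>. dens \<omega> \<partial>M) = 1" using nn_integral_times_dens[of "\<lambda>_. 1"] by (simp add: emeasure_space_1)
  then have "AE \<omega> in M. dens \<omega> \<noteq> \<top>" using nn_integral_PInf_AE[OF dens_M] by simp
  then show ?thesis unfolding Q_def
    by (intro density_cong) (auto simp: less_top elim!: eventually_mono)
qed

lemma f_measurable_Q: "f \<in> borel_measurable Q"
  using measurable_N_M[OF f_measurable] by (simp add: Q_def)

lemma nn_integral_f_Q_less:
  assumes "2 * measure M B < c"
  shows "(\<integral>\<^sup>+\<omega>. f \<omega> \<partial>Q) < ennreal c"
proof -
  have "(\<integral>\<^sup>+\<omega>. f \<omega> \<partial>Q) \<le> ennreal (2 * measure M B)"
    using nn_integral_f_Q by (simp add: emeasure_eq_measure ennreal_mult)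
  also have "\<dots> < ennreal c"
    using assms measure_nonneg[of M B] by (intro ennreal_lessI) linarith+
  finally show ?thesis .
qed

lemma tv_norm_diff_Q_le: "tv_norm_diff Q M \<le> 2 * measure M B"
proof (rule tv_norm_diff_le_twice_measure)
  show "finite_measure Q" using prob_space_Q unfolding prob_space_def by blast
  show "sets Q = sets M" by (simp add: Q_def)
  show "measure Q (A - B) = measure M (A - B)" if "A \<in> sets M" for A
    using emeasure_Q_outside[OF that] by (simp add: measure_def)
  show "measure Q B = measure M B" using emeasure_Q_A[OF B_sets] by (simp add: measure_def)
qed (simp_all add: finite_measure_axioms)

end

section \<open>Sticky localized processes\<close>

locale sticky_localized_process =
  fixes M :: "'a measure" and T :: real and F :: "real \<Rightarrow> 'a set set"
    and S :: "real \<Rightarrow> 'a \<Rightarrow> real^'d" and \<sigma> :: "nat \<Rightarrow> 'a \<Rightarrow> real" and n :: nat and p :: real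
  assumes prob: "prob_space M" and T_pos: "0 < T" and usual: "usual_conditions M T F"
    and cadlag: "cadlag_on M T S" and sticky: "sticky M T F S" and p_pos: "0 < p"
    and stop: "\<And>m. stop_time M T F (\<sigma> m)"
    and reach: "AE \<omega> in M. \<exists>m. \<sigma> m \<omega> = T"
    and adapted: "\<And>m. adapted_on M T F (\<lambda>t \<omega>. S (min t (\<sigma> m \<omega>)) \<omega>)"
begin

sublocale prob_space M by (rule prob)

abbreviation "\<tau> \<equiv> \<sigma> n"
abbreviation "\<F>\<^sub>T \<equiv> sigma (space M) (F T)"
abbreviation "\<F>\<^sub>\<tau> \<equiv> sigma (space M) (F_at M T F \<tau>)"

definition "osc \<omega> = (SUP u\<in>{\<tau> \<omega>..T}. ennreal (norm (S u \<omega> - S (\<tau> \<omega>) \<omega>)))"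
definition "calm r = {\<omega>\<in>space M. osc \<omega> < ennreal r}"
definition "deviation \<omega> = (SUP t\<in>{0..T}. ennreal (norm (S t \<omega> - S (min t (\<tau> \<omega>)) \<omega>) powr p))"

lemma filtration: "filtration_on M T F" and null_sets_F_0: "null_sets M \<subseteq> F 0"
  using usual unfolding usual_conditions_def by auto

lemma T_mem: "T \<in> {0..T}" using T_pos by simp

lemma sets_F_T: "sets \<F>\<^sub>T = F T" and space_F_T: "space \<F>\<^sub>T = space M"
  using sets_sigma_filtration[OF filtration T_mem] space_sigma_filtration[OF filtration T_mem] .

lemma stop_range: "\<omega> \<in> space M \<Longrightarrow> \<sigma> m \<omega> \<in> {0..T}"
  using stop[of m] unfolding stop_time_def by auto

lemma calm_sets: "0 < r \<Longrightarrow> calm r \<in> sets M"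
  and cond_prob_calm_pos: "0 < r \<Longrightarrow> AE \<omega> in M. nn_cond_exp M \<F>\<^sub>\<tau> (indicator (calm r)) \<omega> > 0"
proof -
  assume "0 < r"
  then have real_pos: "AE \<omega> in M. 0 < real_cond_exp M \<F>\<^sub>\<tau> (indicator (calm r)) \<omega>"
    using sticky stop[of n] unfolding sticky_def calm_def osc_def by force
  have le: "real_cond_exp M \<F>\<^sub>\<tau> (indicator (calm r)) \<omega>
      \<le> enn2real (nn_cond_exp M \<F>\<^sub>\<tau> (indicator (calm r)) \<omega>)" for \<omega>
    unfolding real_cond_exp_def by (simp add: ennreal_indicator)
  have pos: "AE \<omega> in M. 0 < enn2real (nn_cond_exp M \<F>\<^sub>\<tau> (indicator (calm r)) \<omega>)"
    using real_pos by eventually_elim (use le in \<open>auto intro: less_le_trans\<close>)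
  \<comment> \<open>A non-measurable argument would make the conditional expectation vanish.\<close>
  have "(indicator (calm r) :: 'a \<Rightarrow> ennreal) \<in> borel_measurable M"
  proof (rule ccontr)
    assume "(indicator (calm r) :: 'a \<Rightarrow> ennreal) \<notin> borel_measurable M"
    then have "AE \<omega> in M. False" using pos unfolding nn_cond_exp_def by simp
    then show False using emeasure_space_1 by (simp add: AE_iff_null)
  qed
  then have "calm r \<inter> space M \<in> sets M" by (simp add: borel_measurable_indicator_iff)
  then show "calm r \<in> sets M" by (simp add: calm_def Int_absorb2)
  show "AE \<omega> in M. nn_cond_exp M \<F>\<^sub>\<tau> (indicator (calm r)) \<omega> > 0"
    using pos by eventually_elim (metis enn2real_0 not_gr_zero order_less_irrefl)
qed

lemma stopped_measurable_F_T:
  "t \<in> {0..T} \<Longrightarrow> (\<lambda>\<omega>. S (min t (\<sigma> m \<omega>)) \<omega>) \<in> borel_measurable \<F>\<^sub>T"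
  using adapted_on_measurable[OF filtration adapted[of m], of t T] by simp

lemma stop_measurable_F_T: "\<sigma> m \<in> borel_measurable \<F>\<^sub>T"
  using stop_time_measurable[OF filtration _ stop] T_pos by simp

text \<open>Right-continuity reduces \<open>osc\<close> to a countable supremum; on the event where the
  localizing time \<open>\<sigma> m\<close> reaches \<open>T\<close>, the path may be read off the adapted process stopped at \<open>\<sigma> m\<close>.\<close>

definition "osc_approx m \<omega> = (SUP q\<in>{q. q \<in> \<rat> \<or> q = T}. if \<tau> \<omega> \<le> q \<and> q \<le> T
  then ennreal (norm (S (min (max 0 (min q T)) (\<sigma> m \<omega>)) \<omega> - S (min T (\<tau> \<omega>)) \<omega>)) else 0)"

lemma osc_approx_measurable: "osc_approx m \<in> borel_measurable \<F>\<^sub>T"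
proof -
  have "countable {q::real. q \<in> \<rat> \<or> q = T}"
    using countable_rat by (simp add: Collect_disj_eq Collect_mem_eq)
  moreover have "(\<lambda>\<omega>. if \<tau> \<omega> \<le> q \<and> q \<le> T
      then ennreal (norm (S (min (max 0 (min q T)) (\<sigma> m \<omega>)) \<omega> - S (min T (\<tau> \<omega>)) \<omega>)) else 0)
      \<in> borel_measurable \<F>\<^sub>T" for q
  proof -
    have [measurable]: "(\<lambda>\<omega>. S (min (max 0 (min q T)) (\<sigma> m \<omega>)) \<omega>) \<in> borel_measurable \<F>\<^sub>T"
      using T_pos by (intro stopped_measurable_F_T) auto
    have [measurable]: "(\<lambda>\<omega>. S (min T (\<tau> \<omega>)) \<omega>) \<in> borel_measurable \<F>\<^sub>T"
      using stopped_measurable_F_T[OF T_mem] .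
    have [measurable]: "\<tau> \<in> borel_measurable \<F>\<^sub>T" by (rule stop_measurable_F_T)
    show ?thesis by measurable
  qed
  ultimately show ?thesis unfolding osc_approx_def[abs_def] by (intro borel_measurable_SUP) auto
qed

lemma osc_eq_osc_approx:
  assumes \<omega>: "\<omega> \<in> space M" and reached: "\<sigma> m \<omega> = T"
  shows "osc \<omega> = osc_approx m \<omega>"
proof -
  let ?h = "\<lambda>u. ennreal (norm (S u \<omega> - S (\<tau> \<omega>) \<omega>))"
  have \<tau>: "\<tau> \<omega> \<in> {0..T}" by (rule stop_range[OF \<omega>])
  have "\<forall>u\<in>{\<tau> \<omega>..<T}. (?h \<longlongrightarrow> ?h u) (at_right u)"
    using cadlag \<omega> \<tau> unfolding cadlag_on_def by (auto intro!: tendsto_intros)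
  then have "osc \<omega> = (SUP q\<in>{q. (q \<in> \<rat> \<or> q = T) \<and> \<tau> \<omega> \<le> q \<and> q \<le> T}. ?h q)"
    unfolding osc_def using \<tau> by (intro SUP_right_continuous_eq_SUP_rat) auto
  also have "\<dots> = (SUP q\<in>{q. q \<in> \<rat> \<or> q = T}. if \<tau> \<omega> \<le> q \<and> q \<le> T then ?h q else 0)"
    unfolding SUP_if_else_0 by (simp add: conj_assoc)
  also have "\<dots> = osc_approx m \<omega>"
    unfolding osc_approx_def
  proof (rule SUP_cong[OF refl])
    fix q assume "q \<in> {q. q \<in> \<rat> \<or> q = T}"
    show "(if \<tau> \<omega> \<le> q \<and> q \<le> T then ?h q else 0) = (if \<tau> \<omega> \<le> q \<and> q \<le> T
        then ennreal (norm (S (min (max 0 (min q T)) (\<sigma> m \<omega>)) \<omega> - S (min T (\<tau> \<omega>)) \<omega>)) else 0)"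
    proof (cases "\<tau> \<omega> \<le> q \<and> q \<le> T")
      case True
      have "min (max 0 (min q T)) (\<sigma> m \<omega>) = q" and "min T (\<tau> \<omega>) = \<tau> \<omega>"
        using True \<tau> reached by auto
      then show ?thesis by (simp only: if_P[OF True])
    next
      case False
      show ?thesis by (simp only: if_not_P[OF False])
    qed
  qed
  finally show ?thesis .
qed

definition "reached m = {\<omega>\<in>space M. \<sigma> m \<omega> = T}"
definition "unreached = space M - (\<Union>m. reached m)"

lemma reached_in_F_T: "reached m \<in> F T"
proof -
  have [measurable]: "\<sigma> m \<in> borel_measurable \<F>\<^sub>T" by (rule stop_measurable_F_T)
  have "{\<omega>\<in>space \<F>\<^sub>T. \<sigma> m \<omega> = T} \<in> sets \<F>\<^sub>T" by measurable
  then show ?thesis by (simp add: reached_def sets_F_T space_F_T)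
qed

lemma unreached_null: "unreached \<in> null_sets M"
proof -
  interpret FT: sigma_algebra "space M" "F T" by (rule filtration_on_sigma_algebra[OF filtration T_mem])
  have "unreached \<in> F T" unfolding unreached_def using reached_in_F_T by blast
  then have "unreached \<in> sets M" using filtration_on_sets[OF filtration T_mem] by blast
  moreover have "unreached = {\<omega>\<in>space M. \<not> (\<exists>m. \<sigma> m \<omega> = T)}"
    by (auto simp: unreached_def reached_def)
  ultimately show ?thesis using reach by (simp add: AE_iff_null)
qed

lemma calm_eq_reached_approx:
  "calm r = (calm r \<inter> unreached) \<union> (\<Union>m. {\<omega>\<in>space M. osc_approx m \<omega> < ennreal r} \<inter> reached m)"
proof -
  have reached_osc: "osc \<omega> = osc_approx m \<omega>" if "\<omega> \<in> reached m" for \<omega> m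
    using that by (intro osc_eq_osc_approx) (auto simp: reached_def)
  show ?thesis
  proof (intro set_eqI iffI)
    fix \<omega> assume \<omega>: "\<omega> \<in> calm r"
    show "\<omega> \<in> (calm r \<inter> unreached) \<union> (\<Union>m. {\<omega>\<in>space M. osc_approx m \<omega> < ennreal r} \<inter> reached m)"
    proof (cases "\<omega> \<in> unreached")
      case False
      then obtain m where m: "\<omega> \<in> reached m" using \<omega> by (auto simp: unreached_def calm_def)
      then show ?thesis using \<omega> reached_osc[OF m] by (auto simp: calm_def)
    qed (use \<omega> in auto)
  next
    fix \<omega> assume \<omega>: "\<omega> \<in> (calm r \<inter> unreached) \<union> (\<Union>m. {\<omega>\<in>space M. osc_approx m \<omega> < ennreal r} \<inter> reached m)"
    show "\<omega> \<in> calm r"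
    proof (cases "\<omega> \<in> calm r \<inter> unreached")
      case False
      then obtain m where "osc_approx m \<omega> < ennreal r" "\<omega> \<in> space M" and m: "\<omega> \<in> reached m"
        using \<omega> by auto
      then show ?thesis using reached_osc[OF m] by (auto simp: calm_def)
    qed auto
  qed
qed

text \<open>Off the null set \<open>unreached\<close> the event is read off adapted processes; on it nothing is known
  about \<open>S\<close>, but \<open>calm r \<in> sets M\<close> (a consequence of stickiness) makes the trace a null set, which
  lies in \<open>F 0\<close> by the usual conditions.\<close>

lemma calm_in_F_T:
  assumes "0 < r"
  shows "calm r \<in> F T"
proof -
  interpret FT: sigma_algebra "space M" "F T" by (rule filtration_on_sigma_algebra[OF filtration T_mem])
  have approx_F_T: "{\<omega>\<in>space M. osc_approx m \<omega> < ennreal r} \<in> F T" for m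
  proof -
    have [measurable]: "osc_approx m \<in> borel_measurable \<F>\<^sub>T" by (rule osc_approx_measurable)
    have "{\<omega>\<in>space \<F>\<^sub>T. osc_approx m \<omega> < ennreal r} \<in> sets \<F>\<^sub>T" by measurable
    then show ?thesis by (simp add: sets_F_T space_F_T)
  qed
  have "calm r \<inter> unreached \<in> F 0"
    using null_sets_F_0 null_set_Int2[OF unreached_null calm_sets[OF assms]] by (auto simp: Int_commute)
  then have null_part: "calm r \<inter> unreached \<in> F T"
    using filtration_on_mono[OF filtration T_mem, of 0] T_pos by auto
  have "(calm r \<inter> unreached) \<union> (\<Union>m. {\<omega>\<in>space M. osc_approx m \<omega> < ennreal r} \<inter> reached m) \<in> F T"
    using approx_F_T reached_in_F_T by (intro FT.Un[OF null_part] FT.countable_nat_UN) auto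
  then show ?thesis by (subst calm_eq_reached_approx)
qed

lemma deviation_le_iff:
  assumes \<omega>: "\<omega> \<in> space M" and "0 \<le> c"
  shows "deviation \<omega> \<le> ennreal c \<longleftrightarrow> osc \<omega> \<le> ennreal (c powr (1/p))"
proof -
  have \<tau>: "\<tau> \<omega> \<in> {0..T}" by (rule stop_range[OF \<omega>])
  have "deviation \<omega> \<le> ennreal c \<longleftrightarrow> (\<forall>t\<in>{0..T}. norm (S t \<omega> - S (min t (\<tau> \<omega>)) \<omega>) powr p \<le> c)"
    unfolding deviation_def SUP_le_iff using \<open>0 \<le> c\<close> by (simp add: ennreal_le_iff)
  also have "\<dots> \<longleftrightarrow> (\<forall>u\<in>{\<tau> \<omega>..T}. norm (S u \<omega> - S (\<tau> \<omega>) \<omega>) powr p \<le> c)"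
  proof
    assume h: "\<forall>t\<in>{0..T}. norm (S t \<omega> - S (min t (\<tau> \<omega>)) \<omega>) powr p \<le> c"
    show "\<forall>u\<in>{\<tau> \<omega>..T}. norm (S u \<omega> - S (\<tau> \<omega>) \<omega>) powr p \<le> c"
    proof
      fix u assume "u \<in> {\<tau> \<omega>..T}"
      then have "u \<in> {0..T}" "min u (\<tau> \<omega>) = \<tau> \<omega>" using \<tau> by auto
      then show "norm (S u \<omega> - S (\<tau> \<omega>) \<omega>) powr p \<le> c" using h by metis
    qed
  next
    assume h: "\<forall>u\<in>{\<tau> \<omega>..T}. norm (S u \<omega> - S (\<tau> \<omega>) \<omega>) powr p \<le> c"
    show "\<forall>t\<in>{0..T}. norm (S t \<omega> - S (min t (\<tau> \<omega>)) \<omega>) powr p \<le> c"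
    proof
      fix t assume t: "t \<in> {0..T}"
      show "norm (S t \<omega> - S (min t (\<tau> \<omega>)) \<omega>) powr p \<le> c"
      proof (cases "t < \<tau> \<omega>")
        case False
        then have "t \<in> {\<tau> \<omega>..T}" "min t (\<tau> \<omega>) = \<tau> \<omega>" using t by auto
        then show ?thesis using h by metis
      qed (use \<open>0 \<le> c\<close> in \<open>simp add: min_def\<close>)
    qed
  qed
  also have "\<dots> \<longleftrightarrow> (\<forall>u\<in>{\<tau> \<omega>..T}. norm (S u \<omega> - S (\<tau> \<omega>) \<omega>) \<le> c powr (1/p))"
    using powr_le_iff_le_powr_inverse[OF norm_ge_zero \<open>0 \<le> c\<close> p_pos] by blast
  also have "\<dots> \<longleftrightarrow> osc \<omega> \<le> ennreal (c powr (1/p))"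
    unfolding osc_def SUP_le_iff by (simp add: ennreal_le_iff)
  finally show ?thesis .
qed

lemma deviation_measurable: "deviation \<in> borel_measurable \<F>\<^sub>T"
proof (rule borel_measurableI_le)
  fix y :: ennreal
  show "{\<omega> \<in> space \<F>\<^sub>T. deviation \<omega> \<le> y} \<in> sets \<F>\<^sub>T"
  proof (cases y)
    case (real c)
    let ?r = "\<lambda>j::nat. c powr (1/p) + 1 / Suc j"
    interpret FT: sigma_algebra "space M" "F T" by (rule filtration_on_sigma_algebra[OF filtration T_mem])
    have "\<omega> \<in> space M \<Longrightarrow> deviation \<omega> \<le> y \<longleftrightarrow> (\<forall>j. osc \<omega> < ennreal (?r j))" for \<omega>
      using deviation_le_iff[of \<omega> c] ennreal_le_iff_less_all_Suc[of "c powr (1/p)" "osc \<omega>"] real by simp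
    then have "{\<omega> \<in> space M. deviation \<omega> \<le> y} = (\<Inter>j. calm (?r j))"
      unfolding calm_def by blast
    also have "\<dots> \<in> F T"
      by (intro FT.countable_INT) (auto intro!: calm_in_F_T add_nonneg_pos)
    finally show ?thesis by (simp add: sets_F_T space_F_T)
  qed simp
qed

lemma deviation_finite:
  assumes \<omega>: "\<omega> \<in> space M"
  shows "deviation \<omega> < \<top>"
proof -
  obtain K where K: "\<forall>t\<in>{0..T}. norm (S t \<omega>) \<le> K"
    using cadlag_path_bounded[of T "\<lambda>s. S s \<omega>"] cadlag \<omega> unfolding cadlag_on_def by blast
  have "deviation \<omega> \<le> ennreal ((2 * K) powr p)"
    unfolding deviation_def
  proof (rule SUP_least)
    fix t assume t: "t \<in> {0..T}"
    then have "min t (\<tau> \<omega>) \<in> {0..T}" using stop_range[OF \<omega>] by auto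
    then have "norm (S (min t (\<tau> \<omega>)) \<omega>) \<le> K" and "norm (S t \<omega>) \<le> K" using K t by blast+
    then have "norm (S t \<omega> - S (min t (\<tau> \<omega>)) \<omega>) \<le> 2 * K"
      using norm_triangle_ineq4[of "S t \<omega>" "S (min t (\<tau> \<omega>)) \<omega>"] by linarith
    then show "ennreal (norm (S t \<omega> - S (min t (\<tau> \<omega>)) \<omega>) powr p) \<le> ennreal ((2 * K) powr p)"
      using p_pos by (intro ennreal_leI powr_mono2) auto
  qed
  then show ?thesis using top.not_eq_extremum by (auto simp: le_less_trans)
qed

lemma deviation_le_1_on_calm: "\<omega> \<in> calm 1 \<Longrightarrow> deviation \<omega> \<le> 1"
  using deviation_le_iff[of \<omega> 1] by (auto simp: calm_def)

lemma deviation_eq_0_if_unstopped: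
  assumes \<omega>: "\<omega> \<in> space M" and "\<not> \<tau> \<omega> < T"
  shows "deviation \<omega> = 0"
proof -
  have "\<tau> \<omega> = T" using assms stop_range[OF \<omega>, of n] by auto
  then have "deviation \<omega> = (SUP t\<in>{0..T}. (0::ennreal))"
    unfolding deviation_def by (intro SUP_cong) (auto simp: min_def)
  then show ?thesis using T_pos by simp
qed

lemma conditional_reweighting:
  "conditional_reweighting M \<F>\<^sub>T \<F>\<^sub>\<tau> {\<omega>\<in>space M. \<tau> \<omega> < T} (calm 1) deviation"
proof unfold_locales
  show "subalgebra M \<F>\<^sub>T" by (rule subalgebra_sigma_filtration[OF filtration T_mem])
  show "subalgebra \<F>\<^sub>T \<F>\<^sub>\<tau>" using subalgebra_sigma_F_at[OF filtration] T_pos by simp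
  show "{\<omega>\<in>space M. \<tau> \<omega> < T} \<in> sets \<F>\<^sub>\<tau>"
    using stop_time_less_in_F_at[OF filtration _ stop] T_pos
    by (simp add: sets_sigma_F_at[OF filtration] sigma_sets.Basic)
  show "calm 1 \<in> sets \<F>\<^sub>T" using calm_in_F_T by (simp add: sets_F_T)
  show "AE \<omega> in M. 0 < nn_cond_exp M \<F>\<^sub>\<tau> (indicator (calm 1)) \<omega>" by (rule cond_prob_calm_pos) simp
  show "deviation \<in> borel_measurable \<F>\<^sub>T" by (rule deviation_measurable)
  show "\<And>\<omega>. \<omega> \<in> space M \<Longrightarrow> deviation \<omega> < \<top>" by (rule deviation_finite)
  show "\<And>\<omega>. \<omega> \<in> calm 1 \<Longrightarrow> deviation \<omega> \<le> 1" by (rule deviation_le_1_on_calm)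
  show "\<And>\<omega>. \<omega> \<in> space M \<Longrightarrow> \<omega> \<notin> {\<omega> \<in> space M. \<tau> \<omega> < T} \<Longrightarrow> deviation \<omega> = 0"
    by (simp add: deviation_eq_0_if_unstopped)
qed

end

theorem corollary5p2:
  fixes M :: "'a measure" and T :: real and F :: "real \<Rightarrow> 'a set set"
    and B S :: "real \<Rightarrow> 'a \<Rightarrow> real^'d" and p chi :: real
  assumes "prob_space M"
    and "T > 0"
    and "usual_conditions M T F"
    and "brownian_motion_on M T B"
    and "prob_space.indep_set M (aug_nat_filtration M B T) (F T)"
    and "p \<ge> 1"
    and "cadlag_on M T S"
    and "local_martingale_on M T F S"
    and "sticky M T F S"
    and "chi > 0"
  shows "\<exists>Q St.
           prob_space Q \<and> equiv_measure Q M \<and> tv_norm_diff Q M < chi \<and>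
           martingale_on Q T (\<lambda>t. join_sa M (F t) (aug_nat_filtration M B t)) St \<and>
           (\<lambda>\<omega>. SUP t\<in>{0..T}. ennreal (norm (S t \<omega> - St t \<omega>) powr p)) \<in> borel_measurable Q \<and>
           (\<integral>\<^sup>+ \<omega>. (SUP t\<in>{0..T}. ennreal (norm (S t \<omega> - St t \<omega>) powr p)) \<partial>Q) < ennreal chi"
proof -
  interpret prob_space M by fact
  have fil: "filtration_on M T F" using assms(3) unfolding usual_conditions_def by blast
  have T: "0 \<le> T" and chi: "0 < chi / 2" using assms(2,10) by simp_all
  obtain \<sigma> :: "nat \<Rightarrow> 'a \<Rightarrow> real" and n where stop: "\<And>m. stop_time M T F (\<sigma> m)"
    and reach: "AE \<omega> in M. \<exists>m. \<sigma> m \<omega> = T" and mart: "\<And>m. martingale_on M T F (\<lambda>t \<omega>. S (min t (\<sigma> m \<omega>)) \<omega>)"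
    and small: "measure M {\<omega>\<in>space M. \<sigma> n \<omega> < T} < chi / 2"
    by (rule local_martingale_on_small_failure[OF fil T assms(8) chi]) blast
  interpret X: sticky_localized_process M T F S \<sigma> n p
    by standard (use assms stop reach mart in \<open>auto simp: martingale_on_def\<close>)
  interpret R: conditional_reweighting M "sigma (space M) (F T)" "sigma (space M) (F_at M T F (\<sigma> n))"
      "{\<omega>\<in>space M. \<sigma> n \<omega> < T}" "X.calm 1" X.deviation
    by (rule X.conditional_reweighting)
  let ?St = "\<lambda>t \<omega>. S (min t (\<sigma> n \<omega>)) \<omega>"
  interpret C: stopped_change_of_measure M R.Q T F "\<sigma> n" S
    using fil assms(2) stop mart R.emeasure_Q_A by unfold_locales (simp_all add: R.Q_def)
  have "martingale_on R.Q T (\<lambda>t. join_sa M (F t) (aug_nat_filtration M B t)) ?St"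
    using C.martingale_on_Q R.dens_N unfolding R.Q_density_enn2real
    by (intro martingale_on_join_independent[where G = "aug_nat_filtration M B", OF assms(1) fil _ _ assms(5)])
      (auto intro: sigma_algebra_aug_nat_filtration dest: aug_nat_filtration_mono[THEN subsetD])
  moreover have "tv_norm_diff R.Q M < chi" using R.tv_norm_diff_Q_le small by linarith
  moreover have "(\<integral>\<^sup>+\<omega>. X.deviation \<omega> \<partial>R.Q) < ennreal chi" using small by (intro R.nn_integral_f_Q_less) simp
  ultimately show ?thesis
    using R.prob_space_Q R.equiv_measure_Q R.f_measurable_Q unfolding X.deviation_def by blast
qed

end
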